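(* Let $(X,b,m)$ be a connected weighted graph satisfying conditions (B) and (M), let $D\subset X$ be relatively dense and $\Omega:=X\setminus D\ne\emptyset$. Let $I\subset\mathbb{R}$ be a Borel set having a maximum with $\max I<\frac{1}{\mathrm{Inr}(\Omega)\cdot\mathrm{vol}[\mathrm{Inr}(\Omega)]}$. Then $$P_I(H)\,1_D\,P_I(H)\ge\frac{\left(\frac{1}{\mathrm{Inr}(\Omega)\cdot\mathrm{vol}[\mathrm{Inr}(\Omega)]}-\max I\right)^2}{16\,\|H+1\|^4}\,P_I(H).$$
   Context: A weighted graph $(X,b,m)$: $X$ countable, $b:X\times X\to[0,\infty)$ symmetric with $b(x,x)=0$ and $\sum_y b(x,y)<\infty$, $m:X\to(0,\infty)$; $\mathrm{vol}(A):=\sum_{x\in A}m(x)$. Condition (B): $\sup_x\frac{1}{m(x)}\sum_y b(x,y)<\infty$. Condition (M): $\sup_x m(x)<\infty$. On $\ell^2(X,m)$, $H$ is the bounded selfadjoint operator $(Hf)(x)=\frac{1}{m(x)}\sum_y b(x,y)(f(x)-f(y))$; $P_I(H)$ is its spectral projection onto $I$, and $1_D$ is multiplication by the indicator of $D$. A path is $\gamma=(x_0,\dots,x_k)$ with $b(x_j,x_{j+1})>0$, of length $\sum_{j=0}^{k-1}1/b(x_j,x_{j+1})$; connected means any two points are joined by a path; $d(x,y)$ is the infimum of path lengths; $U_r(x):=\{y:d(x,y)<r\}$, $B_r(x):=\{y:d(x,y)\le r\}$. $D$ is relatively dense if $\inf\{R>0:\bigcup_{p\in D}B_R(p)=X\}<\infty$.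 $\mathrm{Inr}(\Omega):=\sup\{r>0:\exists x\in\Omega\text{ with }U_r(x)\subset\Omega\}$ and $\mathrm{vol}[s]:=\sup_{x\in X}\mathrm{vol}(B_s(x))$. *)

theory Defs
  imports "HOL-Analysis.Analysis"
begin

text \<open>The vertex set X is the whole (countable) type 'a; b is the edge weight,
  m the vertex measure.\<close>

definition weighted_graph :: "('a \<Rightarrow> 'a \<Rightarrow> real) \<Rightarrow> ('a \<Rightarrow> real) \<Rightarrow> bool" where
  "weighted_graph b m \<longleftrightarrow>
     (\<forall>x y. b x y = b y x) \<and> (\<forall>x. b x x = 0) \<and> (\<forall>x y. 0 \<le> b x y) \<and>
     (\<forall>x. (\<lambda>y. b x y) summable_on UNIV) \<and> (\<forall>x. 0 < m x)"

definition vol :: "('a \<Rightarrow> real) \<Rightarrow> 'a set \<Rightarrow> real" where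
  "vol m A = (\<Sum>\<^sub>\<infinity>x\<in>A. m x)"

definition condB :: "('a \<Rightarrow> 'a \<Rightarrow> real) \<Rightarrow> ('a \<Rightarrow> real) \<Rightarrow> bool" where
  "condB b m \<longleftrightarrow> (\<exists>C. \<forall>x. (\<Sum>\<^sub>\<infinity>y. b x y) / m x \<le> C)"

definition condM :: "('a \<Rightarrow> real) \<Rightarrow> bool" where
  "condM m \<longleftrightarrow> (\<exists>C. \<forall>x. m x \<le> C)"

definition is_path :: "('a \<Rightarrow> 'a \<Rightarrow> real) \<Rightarrow> 'a list \<Rightarrow> bool" where
  "is_path b p \<longleftrightarrow> p \<noteq> [] \<and> (\<forall>j. Suc j < length p \<longrightarrow> 0 < b (p ! j) (p ! Suc j))"

definition path_length :: "('a \<Rightarrow> 'a \<Rightarrow> real) \<Rightarrow> 'a list \<Rightarrow> real" where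
  "path_length b p = (\<Sum>j<length p - 1. 1 / b (p ! j) (p ! Suc j))"

definition graph_connected :: "('a \<Rightarrow> 'a \<Rightarrow> real) \<Rightarrow> bool" where
  "graph_connected b \<longleftrightarrow> (\<forall>x y. \<exists>p. is_path b p \<and> hd p = x \<and> last p = y)"

definition gdist :: "('a \<Rightarrow> 'a \<Rightarrow> real) \<Rightarrow> 'a \<Rightarrow> 'a \<Rightarrow> real" where
  "gdist b x y = Inf {path_length b p | p. is_path b p \<and> hd p = x \<and> last p = y}"

definition open_ball :: "('a \<Rightarrow> 'a \<Rightarrow> real) \<Rightarrow> real \<Rightarrow> 'a \<Rightarrow> 'a set" where
  "open_ball b r x = {y. gdist b x y < r}"

definition closed_ball :: "('a \<Rightarrow> 'a \<Rightarrow> real) \<Rightarrow> real \<Rightarrow> 'a \<Rightarrow> 'a set" where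
  "closed_ball b r x = {y. gdist b x y \<le> r}"

definition relatively_dense :: "('a \<Rightarrow> 'a \<Rightarrow> real) \<Rightarrow> 'a set \<Rightarrow> bool" where
  "relatively_dense b D \<longleftrightarrow> (\<exists>R>0. (\<Union>p\<in>D. closed_ball b R p) = UNIV)"

definition inradius :: "('a \<Rightarrow> 'a \<Rightarrow> real) \<Rightarrow> 'a set \<Rightarrow> real" where
  "inradius b \<Omega> = Sup {r. r > 0 \<and> (\<exists>x\<in>\<Omega>. open_ball b r x \<subseteq> \<Omega>)}"

definition vol_sup :: "('a \<Rightarrow> 'a \<Rightarrow> real) \<Rightarrow> ('a \<Rightarrow> real) \<Rightarrow> real \<Rightarrow> real" where
  "vol_sup b m s = (SUP x. vol m (closed_ball b s x))"

definition in_l2 :: "('a \<Rightarrow> real) \<Rightarrow> ('a \<Rightarrow> real) \<Rightarrow> bool" where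
  "in_l2 m f \<longleftrightarrow> (\<lambda>x. m x * (f x)\<^sup>2) summable_on UNIV"

definition l2_inner :: "('a \<Rightarrow> real) \<Rightarrow> ('a \<Rightarrow> real) \<Rightarrow> ('a \<Rightarrow> real) \<Rightarrow> real" where
  "l2_inner m f g = (\<Sum>\<^sub>\<infinity>x. m x * f x * g x)"

definition l2_norm :: "('a \<Rightarrow> real) \<Rightarrow> ('a \<Rightarrow> real) \<Rightarrow> real" where
  "l2_norm m f = sqrt (l2_inner m f f)"

definition op_norm :: "('a \<Rightarrow> real) \<Rightarrow> (('a \<Rightarrow> real) \<Rightarrow> ('a \<Rightarrow> real)) \<Rightarrow> real" where
  "op_norm m T = Sup {l2_norm m (T f) | f. in_l2 m f \<and> l2_norm m f \<le> 1}"

definition laplacian :: "('a \<Rightarrow> 'a \<Rightarrow> real) \<Rightarrow> ('a \<Rightarrow> real) \<Rightarrow> ('a \<Rightarrow> real) \<Rightarrow> ('a \<Rightarrow> real)" where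
  "laplacian b m f = (\<lambda>x. (1 / m x) * (\<Sum>\<^sub>\<infinity>y. b x y * (f x - f y)))"

text \<open>E is the spectral resolution of the bounded selfadjoint operator H on l^2(X,m):
  E A is an orthogonal projection for every Borel set A, E is multiplicative, E UNIV = id,
  E is supported in a compact interval, and for every f the map A \<mapsto> <E A f, f> is a
  finite Borel measure mu_f with <H f, f> = integral of lambda d mu_f, i.e. H = integral of lambda dE.
  Then P_I(H) = E I.\<close>

definition spectral_resolution ::
  "('a \<Rightarrow> real) \<Rightarrow> (('a \<Rightarrow> real) \<Rightarrow> ('a \<Rightarrow> real)) \<Rightarrow> (real set \<Rightarrow> ('a \<Rightarrow> real) \<Rightarrow> ('a \<Rightarrow> real)) \<Rightarrow> bool"
where
  "spectral_resolution m H E \<longleftrightarrow>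
     (\<forall>A\<in>sets borel. \<forall>f. in_l2 m f \<longrightarrow> in_l2 m (E A f)) \<and>
     (\<forall>A\<in>sets borel. \<forall>f g c. in_l2 m f \<longrightarrow> in_l2 m g \<longrightarrow>
          E A (\<lambda>x. f x + c * g x) = (\<lambda>x. E A f x + c * E A g x)) \<and>
     (\<forall>A\<in>sets borel. \<forall>f g. in_l2 m f \<longrightarrow> in_l2 m g \<longrightarrow>
          l2_inner m (E A f) g = l2_inner m f (E A g)) \<and>
     (\<forall>A\<in>sets borel. \<forall>B\<in>sets borel. \<forall>f. in_l2 m f \<longrightarrow> E (A \<inter> B) f = E A (E B f)) \<and>
     (\<forall>f. in_l2 m f \<longrightarrow> E UNIV f = f) \<and>
     (\<exists>c. \<forall>f. in_l2 m f \<longrightarrow> E (UNIV - {-c..c}) f = (\<lambda>x. 0)) \<and>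
     (\<forall>f. in_l2 m f \<longrightarrow>
        (\<exists>\<mu>. finite_measure \<mu> \<and> sets \<mu> = sets borel \<and>
             (\<forall>A\<in>sets borel. measure \<mu> A = l2_inner m (E A f) f) \<and>
             integrable \<mu> (\<lambda>t. t) \<and>
             l2_inner m (H f) f = (\<integral>t. t \<partial>\<mu>)))"

end

theory Submission
  imports Defs
begin

text \<open>Let \<open>Q(f) = \<langle>H f, f\<rangle> = 1/2 \<Sum> b(x,y) (f x - f y)\<^sup>2\<close> and \<open>\<lambda> = 1 / (Inr(\<Omega>) vol[Inr(\<Omega>)])\<close>.
  Conditions (B) and (M) make closed balls finite, so every vertex has a shortest path into \<open>D\<close>,
  of length at most \<open>Inr(\<Omega>)\<close>. Cauchy-Schwarz along these paths, and the fact that an edge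
  \<open>(u,v)\<close> is used only by the paths of vertices within distance \<open>Inr(\<Omega>)\<close> of \<open>u\<close> and never in
  both directions, give Hardy's inequality \<open>\<lambda> \<parallel>f\<parallel>\<^sup>2 \<le> Q(f)\<close> for \<open>f\<close> vanishing on \<open>D\<close>.
  For \<open>g = P\<^sub>I(H) f\<close> the spectral theorem gives \<open>Q(g) \<le> max I \<parallel>g\<parallel>\<^sup>2\<close>. Hardy's inequality for
  \<open>1\<^sub>\<Omega> g = g - 1\<^sub>D g\<close>, combined with \<open>Q(g - h) \<le> (1 + t) Q(g) + (1 + 1/t) Q(h)\<close> and
  \<open>Q(1\<^sub>D g) \<le> 2 (\<parallel>H + 1\<parallel> - 1) \<parallel>1\<^sub>D g\<parallel>\<^sup>2\<close>, bounds \<open>\<parallel>g\<parallel>\<^sup>2\<close> by a multiple of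
  \<open>\<parallel>1\<^sub>D g\<parallel>\<^sup>2 = \<langle>P\<^sub>I(H) 1\<^sub>D P\<^sub>I(H) f, f\<rangle>\<close> once \<open>t = (\<lambda> - max I) / (2 \<lambda>)\<close>.\<close>

lemma abs_mult_le_sum_squares:
  fixes a c :: real
  shows "2 * \<bar>a * c\<bar> \<le> a\<^sup>2 + c\<^sup>2"
proof -
  have "0 \<le> (\<bar>a\<bar> - \<bar>c\<bar>)\<^sup>2" by simp
  then show ?thesis by (simp add: abs_mult power2_eq_square algebra_simps)
qed

lemma square_diff_le:
  fixes a c :: real
  shows "(a - c)\<^sup>2 \<le> 2 * a\<^sup>2 + 2 * c\<^sup>2"
  using abs_mult_le_sum_squares[of a c] by (simp add: power2_diff abs_le_iff)

lemma abs_diff_mult_le: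
  fixes a c :: real
  shows "\<bar>(a - c) * a\<bar> \<le> 2 * a\<^sup>2 + 2 * c\<^sup>2"
proof -
  have "(a - c) * a = a\<^sup>2 - a * c" by (simp add: power2_eq_square algebra_simps)
  moreover have "a * c \<le> \<bar>a * c\<bar>" "- (a * c) \<le> \<bar>a * c\<bar>" by simp_all
  ultimately show ?thesis
    using abs_mult_le_sum_squares[of a c] zero_le_power2[of a] zero_le_power2[of c]
    unfolding abs_le_iff by linarith
qed

lemma abs_le_one_plus_square:
  fixes a :: real
  shows "\<bar>a\<bar> \<le> 1 + a\<^sup>2"
  using abs_mult_le_sum_squares[of a 1] by simp

lemma square_diff_le_weighted:
  fixes a c t :: real
  assumes "t > 0"
  shows "(a - c)\<^sup>2 \<le> (1 + t) * a\<^sup>2 + (1 + 1 / t) * c\<^sup>2"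
proof -
  have "t * ((1 + t) * a\<^sup>2 + (1 + 1 / t) * c\<^sup>2 - (a - c)\<^sup>2) = (t * a + c)\<^sup>2"
    using assms by (simp add: field_simps power2_eq_square)
  then have "0 \<le> t * ((1 + t) * a\<^sup>2 + (1 + 1 / t) * c\<^sup>2 - (a - c)\<^sup>2)" by simp
  then show ?thesis using assms by (simp add: zero_le_mult_iff)
qed

text \<open>The source of the constant: the hypothesis gives \<open>(l - s)\<^sup>2 G \<le> 32 c\<^sup>2 X\<close>,
  and \<open>2 c\<^sup>2 \<le> (c + 1)\<^sup>4\<close>.\<close>

lemma uncertainty_arith:
  fixes l s c t G X :: real
  assumes "0 \<le> s" and "s < l" and "l \<le> 2 * c" and "0 \<le> G" and "0 \<le> X"
    and t: "t = (l - s) / (2 * l)"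
    and key: "l * (G - X) \<le> (1 + t) * s * G + (1 + 1 / t) * (2 * c * X)"
  shows "(l - s)\<^sup>2 / (16 * (c + 1) ^ 4) * G \<le> X"
proof -
  define a q where "a = l - s" and "q = 1 / t"
  have a: "0 < a" "a \<le> l" and l: "0 < l" and c: "0 < c" using assms unfolding a_def by auto
  have aq: "a * q = 2 * l" unfolding q_def t a_def[symmetric] using a l by simp
  have "t * s \<le> a / 2" unfolding t a_def[symmetric] using a l assms(1,2)
    by (simp add: field_simps mult_left_mono)
  then have "t * s * G \<le> a / 2 * G" using assms(4) by (rule mult_right_mono)
  then have "a / 2 * G \<le> (l + (1 + q) * (2 * c)) * X"
    using key unfolding q_def[symmetric] a_def by (simp add: algebra_simps)
  then have "a * (a / 2 * G) \<le> a * ((l + (1 + q) * (2 * c)) * X)"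
    using a by (intro mult_left_mono) auto
  also have "\<dots> = (a * l + 2 * c * a + 2 * c * (a * q)) * X" by (simp add: algebra_simps)
  also have "\<dots> \<le> 16 * c\<^sup>2 * X"
  proof -
    have "a * l \<le> 2 * c * (2 * c)" using a l assms(3) by (intro mult_mono) auto
    moreover have "2 * c * a \<le> 2 * c * (2 * c)" "2 * c * (2 * l) \<le> 2 * c * (4 * c)"
      using a c assms(3) by (simp_all add: mult_left_mono)
    ultimately have "a * l + 2 * c * a + 2 * c * (2 * l) \<le> 16 * c\<^sup>2"
      by (simp add: power2_eq_square algebra_simps)
    then show ?thesis unfolding aq using assms(5) by (rule mult_right_mono)
  qed
  finally have "a\<^sup>2 * G \<le> 32 * c\<^sup>2 * X" by (simp add: power2_eq_square algebra_simps)
  also have "\<dots> \<le> 16 * (c + 1) ^ 4 * X"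
  proof -
    have "2 * c\<^sup>2 \<le> ((c + 1)\<^sup>2)\<^sup>2"
      using c power_mono[of "2 * c + 1" "(c + 1)\<^sup>2" 2] by (simp add: power2_eq_square algebra_simps)
    then show ?thesis using assms(5)
      by (intro mult_right_mono) (simp_all add: power_mult[symmetric])
  qed
  finally show ?thesis unfolding a_def using c by (simp add: field_simps)
qed

lemma summable_on_abs_le:
  fixes f g :: "'b \<Rightarrow> real"
  assumes "g summable_on A" and "\<And>x. x \<in> A \<Longrightarrow> \<bar>f x\<bar> \<le> g x"
  shows "f summable_on A"
proof -
  have "(\<lambda>x. norm (f x)) summable_on A"
    by (rule summable_on_comparison_test[OF assms(1)]) (use assms(2) in auto)
  then show ?thesis by (rule abs_summable_summable)
qed

lemma infsum_single_support:
  fixes f :: "'b \<Rightarrow> real"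
  assumes "\<And>z. z \<noteq> y \<Longrightarrow> f z = 0"
  shows "f summable_on UNIV" and "infsum f UNIV = f y"
proof -
  show "f summable_on UNIV"
    by (rule finite_nonzero_values_imp_summable_on)
      (use assms in \<open>auto intro: finite_subset[of _ "{y}"]\<close>)
  have "infsum f UNIV = infsum f {y}"
    by (rule infsum_cong_neutral) (use assms in auto)
  then show "infsum f UNIV = f y" by simp
qed

lemma infsum_Cauchy_Schwarz:
  fixes w a :: "'b \<Rightarrow> real"
  assumes w_nonneg: "\<And>y. 0 \<le> w y" and "w summable_on UNIV"
    and "(\<lambda>y. w y * a y) summable_on UNIV" and "(\<lambda>y. w y * (a y)\<^sup>2) summable_on UNIV"
  shows "(\<Sum>\<^sub>\<infinity>y. w y * a y)\<^sup>2 \<le> (\<Sum>\<^sub>\<infinity>y. w y) * (\<Sum>\<^sub>\<infinity>y. w y * (a y)\<^sup>2)"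
proof -
  define W S T where "W = (\<Sum>\<^sub>\<infinity>y. w y)" and "S = (\<Sum>\<^sub>\<infinity>y. w y * a y)"
    and "T = (\<Sum>\<^sub>\<infinity>y. w y * (a y)\<^sup>2)"
  have quadratic_nonneg: "0 \<le> T - 2 * s * S + s\<^sup>2 * W" for s
  proof -
    have expand: "(\<lambda>y. w y * (a y - s)\<^sup>2) = (\<lambda>y. w y * (a y)\<^sup>2 + ((-2 * s) * (w y * a y) + s\<^sup>2 * w y))"
      by (auto simp: fun_eq_iff power2_eq_square algebra_simps)
    have sa: "(\<lambda>y. (-2 * s) * (w y * a y)) summable_on UNIV" using assms(3)
      by (rule summable_on_cmult_right)
    have sb: "(\<lambda>y. s\<^sup>2 * w y) summable_on UNIV" using assms(2) by (rule summable_on_cmult_right)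
    have "(\<Sum>\<^sub>\<infinity>y. w y * (a y - s)\<^sup>2) = T + ((-2 * s) * S + s\<^sup>2 * W)"
      unfolding expand T_def S_def W_def
      using infsum_add[OF assms(4) summable_on_add[OF sa sb]] infsum_add[OF sa sb]
      by (simp only: infsum_cmult_right')
    moreover have "0 \<le> (\<Sum>\<^sub>\<infinity>y. w y * (a y - s)\<^sup>2)" by (rule infsum_nonneg) (use w_nonneg in auto)
    ultimately show ?thesis by simp
  qed
  show ?thesis
  proof (cases "W = 0")
    case True
    then have "w y = 0" for y
      using nonneg_infsum_le_0D[of w UNIV y] assms(2) w_nonneg unfolding W_def by auto
    then show ?thesis by simp
  next
    case False
    then have "W > 0" using w_nonneg unfolding W_def by (simp add: infsum_nonneg order_less_le)
    moreover have "0 \<le> T - 2 * (S / W) * S + (S / W)\<^sup>2 * W" by (rule quadratic_nonneg)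
    ultimately have "S\<^sup>2 \<le> W * T" by (simp add: power2_eq_square field_simps)
    then show ?thesis unfolding W_def S_def T_def .
  qed
qed

lemma
  fixes f :: "'b \<Rightarrow> 'c \<Rightarrow> real"
  assumes "(\<lambda>(x, y). f x y) summable_on UNIV"
  shows infsum_UNIV_prod: "(\<Sum>\<^sub>\<infinity>(x, y). f x y) = (\<Sum>\<^sub>\<infinity>x. \<Sum>\<^sub>\<infinity>y. f x y)"
    and summable_on_UNIV_prod_outer: "(\<lambda>x. \<Sum>\<^sub>\<infinity>y. f x y) summable_on UNIV"
    and summable_on_UNIV_prod_inner: "f x summable_on UNIV"
proof -
  have S: "(\<lambda>(x, y). f x y) summable_on (UNIV \<times> UNIV)"
    using assms by (simp only: UNIV_Times_UNIV)
  show "(\<Sum>\<^sub>\<infinity>(x, y). f x y) = (\<Sum>\<^sub>\<infinity>x. \<Sum>\<^sub>\<infinity>y. f x y)"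
    using infsum_Sigma'_banach[OF S] by (simp only: UNIV_Times_UNIV)
  show "(\<lambda>x. \<Sum>\<^sub>\<infinity>y. f x y) summable_on UNIV"
    using summable_on_Sigma_banach[OF S] by simp
  show "f x summable_on UNIV"
    using summable_on_SigmaD1[OF S] by simp
qed

lemma
  fixes f :: "'b \<Rightarrow> 'c \<Rightarrow> real"
  shows summable_on_UNIV_swap:
      "(\<lambda>(x, y). f x y) summable_on UNIV \<Longrightarrow> (\<lambda>(x, y). f y x) summable_on UNIV"
    and infsum_UNIV_swap: "(\<Sum>\<^sub>\<infinity>(x, y). f y x) = (\<Sum>\<^sub>\<infinity>(x, y). f x y)"
proof -
  have swap: "(\<lambda>(x, y). f y x) = (\<lambda>(x, y). f x y) \<circ> prod.swap" by auto
  show "(\<lambda>(x, y). f x y) summable_on UNIV \<Longrightarrow> (\<lambda>(x, y). f y x) summable_on UNIV"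
    unfolding swap using summable_on_reindex[OF inj_swap[of UNIV], of "\<lambda>(x, y). f x y"] by simp
  show "(\<Sum>\<^sub>\<infinity>(x, y). f y x) = (\<Sum>\<^sub>\<infinity>(x, y). f x y)"
    unfolding swap using infsum_reindex[OF inj_swap[of UNIV], of "\<lambda>(x, y). f x y"] by simp
qed

lemma l2_inner_self: "l2_inner m f f = (\<Sum>\<^sub>\<infinity>x. m x * (f x)\<^sup>2)"
  unfolding l2_inner_def by (simp add: power2_eq_square mult.assoc)

lemma in_l2_indicator_mult:
  assumes "\<And>x. 0 \<le> m x" and "in_l2 m g"
  shows "in_l2 m (\<lambda>x. indicator A x * g x)"
  unfolding in_l2_def
  by (rule summable_on_abs_le[OF assms(2)[unfolded in_l2_def]])
    (use assms(1) in \<open>auto simp: indicator_def\<close>)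

lemma l2_split_indicator:
  assumes "\<And>x. 0 \<le> m x" and "in_l2 m g"
  shows "(\<Sum>\<^sub>\<infinity>x. m x * (g x)\<^sup>2)
    = (\<Sum>\<^sub>\<infinity>x. m x * (indicator A x * g x)\<^sup>2) + (\<Sum>\<^sub>\<infinity>x. m x * (indicator (- A) x * g x)\<^sup>2)"
proof -
  have "(\<Sum>\<^sub>\<infinity>x. m x * (g x)\<^sup>2)
      = (\<Sum>\<^sub>\<infinity>x. m x * (indicator A x * g x)\<^sup>2 + m x * (indicator (- A) x * g x)\<^sup>2)"
    by (rule infsum_cong) (auto simp: indicator_def)
  also have "\<dots> = (\<Sum>\<^sub>\<infinity>x. m x * (indicator A x * g x)\<^sup>2) + (\<Sum>\<^sub>\<infinity>x. m x * (indicator (- A) x * g x)\<^sup>2)"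
    using in_l2_indicator_mult[OF assms, of A] in_l2_indicator_mult[OF assms, of "- A"]
    unfolding in_l2_def by (rule infsum_add)
  finally show ?thesis .
qed

section \<open>Weighted graphs with bounded degree\<close>

locale bounded_weighted_graph =
  fixes b :: "'a::countable \<Rightarrow> 'a \<Rightarrow> real" and m :: "'a \<Rightarrow> real" and C :: real
  assumes weight_sym: "\<And>x y. b x y = b y x" and weight_diag: "\<And>x. b x x = 0"
    and weight_nonneg: "\<And>x y. 0 \<le> b x y" and weight_summable: "\<And>x. b x summable_on UNIV"
    and measure_pos: "\<And>x. 0 < m x"
    and degree_bound: "\<And>x. (\<Sum>\<^sub>\<infinity>y. b x y) \<le> C * m x"
begin

definition deg :: "'a \<Rightarrow> real" where
  "deg x = (\<Sum>\<^sub>\<infinity>y. b x y)"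

definition energy :: "('a \<Rightarrow> real) \<Rightarrow> real" where
  "energy f = (\<Sum>\<^sub>\<infinity>(x, y). b x y * (f x - f y)\<^sup>2) / 2"

lemma deg_nonneg: "0 \<le> deg x"
  unfolding deg_def by (rule infsum_nonneg) (simp add: weight_nonneg)

lemma deg_le: "deg x \<le> C * m x"
  using degree_bound unfolding deg_def by simp

lemma bound_nonneg: "0 \<le> C"
proof -
  have "0 \<le> C * m undefined" using deg_nonneg deg_le order_trans by blast
  then show ?thesis using measure_pos[of undefined] by (simp add: zero_le_mult_iff)
qed

lemma has_sum_deg: "(b x has_sum deg x) UNIV"
  unfolding deg_def using weight_summable by (simp add: has_sum_infsum)

lemma weight_le_deg: "b x y \<le> deg x"
proof -
  have "sum (b x) {y} \<le> infsum (b x) UNIV"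
    by (rule finite_sum_le_infsum) (auto simp: weight_summable weight_nonneg)
  then show ?thesis by (simp add: deg_def)
qed

lemma summable_deg_square:
  assumes "in_l2 m f"
  shows "(\<lambda>x. deg x * (f x)\<^sup>2) summable_on UNIV"
proof (rule summable_on_abs_le)
  show "(\<lambda>x. C * (m x * (f x)\<^sup>2)) summable_on UNIV"
    using assms unfolding in_l2_def by (intro summable_on_cmult_right)
  show "\<bar>deg x * (f x)\<^sup>2\<bar> \<le> C * (m x * (f x)\<^sup>2)" for x
    using deg_le[of x] deg_nonneg[of x] mult_right_mono[OF deg_le[of x] zero_le_power2[of "f x"]]
    by (simp add: abs_mult mult.assoc)
qed

lemma infsum_deg_square_le:
  assumes "in_l2 m f" and "\<And>x. deg x \<le> C' * m x"
  shows "(\<Sum>\<^sub>\<infinity>x. deg x * (f x)\<^sup>2) \<le> C' * (\<Sum>\<^sub>\<infinity>x. m x * (f x)\<^sup>2)"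
proof -
  have "(\<Sum>\<^sub>\<infinity>x. deg x * (f x)\<^sup>2) \<le> (\<Sum>\<^sub>\<infinity>x. C' * (m x * (f x)\<^sup>2))"
    by (rule infsum_mono[OF summable_deg_square[OF assms(1)]])
      (use assms in \<open>auto simp: in_l2_def intro: summable_on_cmult_right,
        metis mult.assoc mult_right_mono zero_le_power2\<close>)
  then show ?thesis by (simp add: infsum_cmult_right')
qed

lemma
  assumes "in_l2 m f"
  shows summable_weight_square: "(\<lambda>(x, y). b x y * (f x)\<^sup>2) summable_on UNIV"
    and infsum_weight_square: "(\<Sum>\<^sub>\<infinity>(x, y). b x y * (f x)\<^sup>2) = (\<Sum>\<^sub>\<infinity>x. deg x * (f x)\<^sup>2)"
proof -
  have row: "((\<lambda>y. b x y * (f x)\<^sup>2) has_sum deg x * (f x)\<^sup>2) UNIV" for x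
    using has_sum_cmult_left[OF has_sum_deg[of x], of "(f x)\<^sup>2"] by simp
  have "(\<lambda>(x, y). b x y * (f x)\<^sup>2) summable_on Sigma UNIV (\<lambda>_. UNIV)"
    by (rule summable_on_SigmaI[OF _ summable_deg_square[OF assms]])
      (use row weight_nonneg in auto)
  then show S: "(\<lambda>(x, y). b x y * (f x)\<^sup>2) summable_on UNIV" by simp
  show "(\<Sum>\<^sub>\<infinity>(x, y). b x y * (f x)\<^sup>2) = (\<Sum>\<^sub>\<infinity>x. deg x * (f x)\<^sup>2)"
    unfolding infsum_UNIV_prod[OF S] by (intro infsum_cong infsumI row)
qed

lemma
  assumes "in_l2 m f"
  shows summable_weight_square': "(\<lambda>(x, y). b x y * (f y)\<^sup>2) summable_on UNIV"
    and infsum_weight_square': "(\<Sum>\<^sub>\<infinity>(x, y). b x y * (f y)\<^sup>2) = (\<Sum>\<^sub>\<infinity>x. deg x * (f x)\<^sup>2)"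
proof -
  have swap: "(\<lambda>(x, y). b x y * (f y)\<^sup>2) = (\<lambda>(x, y). b y x * (f y)\<^sup>2)"
    by (simp add: weight_sym)
  show "(\<lambda>(x, y). b x y * (f y)\<^sup>2) summable_on UNIV"
    unfolding swap by (rule summable_on_UNIV_swap[OF summable_weight_square[OF assms]])
  show "(\<Sum>\<^sub>\<infinity>(x, y). b x y * (f y)\<^sup>2) = (\<Sum>\<^sub>\<infinity>x. deg x * (f x)\<^sup>2)"
    unfolding swap infsum_UNIV_swap[of "\<lambda>x y. b x y * (f x)\<^sup>2"]
      by (rule infsum_weight_square[OF assms])
qed

lemma summable_weight_squares:
  assumes "in_l2 m f"
  shows "(\<lambda>(x, y). 2 * (b x y * (f x)\<^sup>2) + 2 * (b x y * (f y)\<^sup>2)) summable_on UNIV"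
  using summable_on_add[OF summable_on_cmult_right[OF summable_weight_square[OF assms]]
      summable_on_cmult_right[OF summable_weight_square'[OF assms]], of 2 2]
  by (simp add: case_prod_unfold)

lemma summable_weight_diff_square:
  assumes "in_l2 m f"
  shows "(\<lambda>(x, y). b x y * (f x - f y)\<^sup>2) summable_on UNIV"
proof (rule summable_on_abs_le[OF summable_weight_squares[OF assms]], clarify)
  fix x y
  have "b x y * (f x - f y)\<^sup>2 \<le> b x y * (2 * (f x)\<^sup>2 + 2 * (f y)\<^sup>2)"
    using weight_nonneg[of x y] square_diff_le by (intro mult_left_mono) auto
  then show "\<bar>b x y * (f x - f y)\<^sup>2\<bar> \<le> 2 * (b x y * (f x)\<^sup>2) + 2 * (b x y * (f y)\<^sup>2)"
    using weight_nonneg[of x y] by (simp add: algebra_simps)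
qed

lemma summable_weight_diff_mult:
  assumes "in_l2 m f"
  shows "(\<lambda>(x, y). b x y * (f x - f y) * f x) summable_on UNIV"
proof (rule summable_on_abs_le[OF summable_weight_squares[OF assms]], clarify)
  fix x y
  have "\<bar>b x y * (f x - f y) * f x\<bar> = b x y * \<bar>(f x - f y) * f x\<bar>"
    using weight_nonneg[of x y] by (simp add: abs_mult)
  also have "\<dots> \<le> b x y * (2 * (f x)\<^sup>2 + 2 * (f y)\<^sup>2)"
    using weight_nonneg[of x y] abs_diff_mult_le by (intro mult_left_mono) auto
  finally show "\<bar>b x y * (f x - f y) * f x\<bar> \<le> 2 * (b x y * (f x)\<^sup>2) + 2 * (b x y * (f y)\<^sup>2)"
    by (simp add: algebra_simps)
qed

lemma summable_weight_mult:
  assumes "in_l2 m f"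
  shows "(\<lambda>y. b x y * f y) summable_on UNIV"
proof (rule summable_on_abs_le)
  show "(\<lambda>y. b x y + C * (m y * (f y)\<^sup>2)) summable_on UNIV"
    using assms weight_summable unfolding in_l2_def
      by (intro summable_on_add summable_on_cmult_right) auto
  fix y
  have bound: "b x y \<le> C * m y"
    using weight_sym[of x y] weight_le_deg[of y x] deg_le[of y] by linarith
  have "\<bar>b x y * f y\<bar> \<le> b x y * (1 + (f y)\<^sup>2)"
    using weight_nonneg[of x y] abs_le_one_plus_square[of "f y"]
      by (simp add: abs_mult mult_left_mono)
  also have "\<dots> \<le> b x y + C * m y * (f y)\<^sup>2"
    using bound by (simp add: distrib_left mult_right_mono)
  finally show "\<bar>b x y * f y\<bar> \<le> b x y + C * (m y * (f y)\<^sup>2)" by (simp add: mult.assoc)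
qed

lemma laplacian_eq:
  assumes "in_l2 m f"
  shows "laplacian b m f x = (deg x * f x - (\<Sum>\<^sub>\<infinity>y. b x y * f y)) / m x"
proof -
  have "(\<Sum>\<^sub>\<infinity>y. b x y * (f x - f y)) = (\<Sum>\<^sub>\<infinity>y. b x y * f x + - (b x y * f y))"
    by (simp add: algebra_simps)
  also have "\<dots> = (\<Sum>\<^sub>\<infinity>y. b x y * f x) - (\<Sum>\<^sub>\<infinity>y. b x y * f y)"
    using infsum_add[OF summable_on_cmult_left[OF weight_summable]
        summable_on_uminus[THEN iffD2, OF summable_weight_mult[OF assms]]]
    by (simp add: infsum_uminus)
  also have "\<dots> = deg x * f x - (\<Sum>\<^sub>\<infinity>y. b x y * f y)"
    unfolding deg_def by (simp add: infsum_cmult_left')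
  finally show ?thesis unfolding laplacian_def by simp
qed

lemma green_formula:
  assumes "in_l2 m f"
  shows "l2_inner m (laplacian b m f) f = energy f"
proof -
  have "l2_inner m (laplacian b m f) f = (\<Sum>\<^sub>\<infinity>x. \<Sum>\<^sub>\<infinity>y. b x y * (f x - f y) * f x)"
    unfolding l2_inner_def laplacian_def
  proof (rule infsum_cong)
    show "m x * (1 / m x * (\<Sum>\<^sub>\<infinity>y. b x y * (f x - f y))) * f x
        = (\<Sum>\<^sub>\<infinity>y. b x y * (f x - f y) * f x)" for x
      using measure_pos[of x] by (simp add: infsum_cmult_left')
  qed
  also have "\<dots> = (\<Sum>\<^sub>\<infinity>(x, y). b x y * (f x - f y) * f x)"
    using infsum_UNIV_prod[OF summable_weight_diff_mult[OF assms]] by simp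
  finally have left: "l2_inner m (laplacian b m f) f = (\<Sum>\<^sub>\<infinity>(x, y). b x y * (f x - f y) * f x)" .
  have swap: "(\<lambda>(x, y). b x y * (f y - f x) * f y) = (\<lambda>(x, y). b y x * (f y - f x) * f y)"
    by (simp add: weight_sym)
  have right: "l2_inner m (laplacian b m f) f = (\<Sum>\<^sub>\<infinity>(x, y). b x y * (f y - f x) * f y)"
    unfolding left swap by (rule infsum_UNIV_swap[symmetric])
  have summable_right: "(\<lambda>(x, y). b x y * (f y - f x) * f y) summable_on UNIV"
    unfolding swap by (rule summable_on_UNIV_swap[OF summable_weight_diff_mult[OF assms]])
  have "2 * l2_inner m (laplacian b m f) f
      = (\<Sum>\<^sub>\<infinity>(x, y). b x y * (f x - f y) * f x + b x y * (f y - f x) * f y)"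
    using infsum_add[OF summable_weight_diff_mult[OF assms] summable_right] left right
    by (simp add: case_prod_unfold)
  also have "\<dots> = (\<Sum>\<^sub>\<infinity>(x, y). b x y * (f x - f y)\<^sup>2)"
    by (rule infsum_cong) (auto simp: power2_eq_square algebra_simps)
  finally show ?thesis unfolding energy_def by simp
qed

lemma energy_nonneg: "0 \<le> energy f"
  unfolding energy_def by (intro divide_nonneg_pos infsum_nonneg) (auto simp: weight_nonneg)

lemma energy_le:
  assumes "in_l2 m f" and "\<And>x. deg x \<le> C' * m x"
  shows "energy f \<le> 2 * C' * (\<Sum>\<^sub>\<infinity>x. m x * (f x)\<^sup>2)"
proof -
  have "(\<Sum>\<^sub>\<infinity>(x, y). b x y * (f x - f y)\<^sup>2)
      \<le> (\<Sum>\<^sub>\<infinity>(x, y). 2 * (b x y * (f x)\<^sup>2) + 2 * (b x y * (f y)\<^sup>2))"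
  proof (rule infsum_mono[OF summable_weight_diff_square[OF assms(1)] summable_weight_squares[OF assms(1)]],
      clarify)
    fix x y
    have "b x y * (f x - f y)\<^sup>2 \<le> b x y * (2 * (f x)\<^sup>2 + 2 * (f y)\<^sup>2)"
      using weight_nonneg[of x y] square_diff_le by (intro mult_left_mono) auto
    then show "b x y * (f x - f y)\<^sup>2 \<le> 2 * (b x y * (f x)\<^sup>2) + 2 * (b x y * (f y)\<^sup>2)"
      by (simp add: algebra_simps)
  qed
  also have "\<dots> = 4 * (\<Sum>\<^sub>\<infinity>x. deg x * (f x)\<^sup>2)"
    using infsum_add[OF summable_on_cmult_right[OF summable_weight_square[OF assms(1)]]
        summable_on_cmult_right[OF summable_weight_square'[OF assms(1)]], of 2 2]
      infsum_weight_square[OF assms(1)] infsum_weight_square'[OF assms(1)]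
    by (simp add: case_prod_unfold infsum_cmult_right')
  finally show ?thesis
    unfolding energy_def using infsum_deg_square_le[OF assms] by linarith
qed

lemma energy_diff_le:
  assumes "in_l2 m g" and "in_l2 m h" and "in_l2 m k" and "\<And>x. k x = g x - h x" and "t > 0"
  shows "energy k \<le> (1 + t) * energy g + (1 + 1 / t) * energy h"
proof -
  have sg: "(\<lambda>(x, y). (1 + t) * (b x y * (g x - g y)\<^sup>2)) summable_on UNIV"
    using summable_on_cmult_right[OF summable_weight_diff_square[OF assms(1)]]
      by (simp add: case_prod_unfold)
  have sh: "(\<lambda>(x, y). (1 + 1 / t) * (b x y * (h x - h y)\<^sup>2)) summable_on UNIV"
    using summable_on_cmult_right[OF summable_weight_diff_square[OF assms(2)]]
      by (simp add: case_prod_unfold)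
  have sgh: "(\<lambda>(x, y). (1 + t) * (b x y * (g x - g y)\<^sup>2) + (1 + 1 / t) * (b x y * (h x - h y)\<^sup>2))
      summable_on UNIV"
    using summable_on_add[OF sg sh] by (simp add: case_prod_unfold)
  have "(\<Sum>\<^sub>\<infinity>(x, y). b x y * (k x - k y)\<^sup>2)
      \<le> (\<Sum>\<^sub>\<infinity>(x, y). (1 + t) * (b x y * (g x - g y)\<^sup>2) + (1 + 1 / t) * (b x y * (h x - h y)\<^sup>2))"
  proof (rule infsum_mono[OF summable_weight_diff_square[OF assms(3)] sgh], clarify)
    fix x y
    have "k x - k y = (g x - g y) - (h x - h y)" using assms(4) by simp
    then have "b x y * (k x - k y)\<^sup>2 \<le> b x y * ((1 + t) * (g x - g y)\<^sup>2 + (1 + 1 / t) * (h x - h y)\<^sup>2)"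
      using weight_nonneg[of x y] square_diff_le_weighted[OF assms(5)]
        by (intro mult_left_mono) auto
    then show "b x y * (k x - k y)\<^sup>2
        \<le> (1 + t) * (b x y * (g x - g y)\<^sup>2) + (1 + 1 / t) * (b x y * (h x - h y)\<^sup>2)"
      by (simp add: algebra_simps)
  qed
  also have "\<dots> = (1 + t) * (\<Sum>\<^sub>\<infinity>(x, y). b x y * (g x - g y)\<^sup>2)
      + (1 + 1 / t) * (\<Sum>\<^sub>\<infinity>(x, y). b x y * (h x - h y)\<^sup>2)"
    using infsum_add[OF sg sh] by (simp add: case_prod_unfold infsum_cmult_right')
  finally show ?thesis unfolding energy_def by (simp add: field_simps)
qed

lemma laplacian_plus_id_square_le:
  assumes "in_l2 m f"
  shows "m x * (laplacian b m f x + f x)\<^sup>2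
    \<le> 2 * (C + 1)\<^sup>2 * (m x * (f x)\<^sup>2) + 2 * C * (\<Sum>\<^sub>\<infinity>y. b x y * (f y)\<^sup>2)"
proof -
  define P R where "P = (\<Sum>\<^sub>\<infinity>y. b x y * f y)" and "R = (\<Sum>\<^sub>\<infinity>y. b x y * (f y)\<^sup>2)"
  define u where "u = deg x / m x + 1"
  have mx: "0 < m x" by (rule measure_pos)
  have deg_div: "0 \<le> deg x / m x" "deg x / m x \<le> C"
    using deg_nonneg[of x] deg_le[of x] mx by (simp_all add: divide_le_eq)
  have "laplacian b m f x + f x = u * f x - P / m x"
    unfolding laplacian_eq[OF assms] u_def P_def by (simp add: diff_divide_distrib distrib_right)
  then have "m x * (laplacian b m f x + f x)\<^sup>2 \<le> m x * (2 * (u * f x)\<^sup>2 + 2 * (P / m x)\<^sup>2)"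
    using mx square_diff_le by (intro mult_left_mono) auto
  also have "\<dots> = 2 * u\<^sup>2 * (m x * (f x)\<^sup>2) + 2 * (P\<^sup>2 / m x)"
    using mx by (simp add: power2_eq_square field_simps)
  also have "\<dots> \<le> 2 * (C + 1)\<^sup>2 * (m x * (f x)\<^sup>2) + 2 * (P\<^sup>2 / m x)"
  proof -
    have "u\<^sup>2 \<le> (C + 1)\<^sup>2" unfolding u_def using deg_div by (intro power_mono) auto
    then show ?thesis using mx by (intro add_right_mono mult_right_mono mult_left_mono) auto
  qed
  also have "P\<^sup>2 / m x \<le> C * R"
  proof -
    have "P\<^sup>2 \<le> deg x * R"
      unfolding P_def R_def deg_def
      by (rule infsum_Cauchy_Schwarz) (use weight_nonneg weight_summable summable_weight_mult[OF assms]
          summable_on_UNIV_prod_inner[OF summable_weight_square'[OF assms]] in auto)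
    then have "P\<^sup>2 / m x \<le> (deg x / m x) * R" using mx by (simp add: divide_right_mono)
    also have "\<dots> \<le> C * R"
      using deg_div(2) by (rule mult_right_mono) (simp add: R_def infsum_nonneg weight_nonneg)
    finally show ?thesis .
  qed
  finally show ?thesis unfolding R_def by simp
qed

lemma
  assumes "in_l2 m f"
  shows in_l2_laplacian_plus_id: "in_l2 m (\<lambda>x. laplacian b m f x + f x)"
    and l2_laplacian_plus_id_le: "(\<Sum>\<^sub>\<infinity>x. m x * (laplacian b m f x + f x)\<^sup>2)
      \<le> (2 * (C + 1)\<^sup>2 + 2 * C\<^sup>2) * (\<Sum>\<^sub>\<infinity>x. m x * (f x)\<^sup>2)"
proof -
  define R where "R x = (\<Sum>\<^sub>\<infinity>y. b x y * (f y)\<^sup>2)" for x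
  have sf: "(\<lambda>x. m x * (f x)\<^sup>2) summable_on UNIV" using assms unfolding in_l2_def .
  have sR: "R summable_on UNIV"
    using summable_on_UNIV_prod_outer[OF summable_weight_square'[OF assms]] unfolding R_def .
  have sum_R: "(\<Sum>\<^sub>\<infinity>x. R x) \<le> C * (\<Sum>\<^sub>\<infinity>x. m x * (f x)\<^sup>2)"
    using infsum_UNIV_prod[OF summable_weight_square'[OF assms]] infsum_weight_square'[OF assms]
      infsum_deg_square_le[OF assms deg_le] unfolding R_def by simp
  have sdom: "(\<lambda>x. 2 * (C + 1)\<^sup>2 * (m x * (f x)\<^sup>2) + 2 * C * R x) summable_on UNIV"
    using sf sR by (intro summable_on_add summable_on_cmult_right)
  have pointwise:
    "m x * (laplacian b m f x + f x)\<^sup>2 \<le> 2 * (C + 1)\<^sup>2 * (m x * (f x)\<^sup>2) + 2 * C * R x" for x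
    unfolding R_def by (rule laplacian_plus_id_square_le[OF assms])
  have sF: "(\<lambda>x. m x * (laplacian b m f x + f x)\<^sup>2) summable_on UNIV"
    by (rule summable_on_abs_le[OF sdom]) (use pointwise measure_pos in \<open>auto intro: order_trans[rotated]
        simp: less_imp_le\<close>)
  then show "in_l2 m (\<lambda>x. laplacian b m f x + f x)" unfolding in_l2_def .
  have "(\<Sum>\<^sub>\<infinity>x. m x * (laplacian b m f x + f x)\<^sup>2)
      \<le> (\<Sum>\<^sub>\<infinity>x. 2 * (C + 1)\<^sup>2 * (m x * (f x)\<^sup>2) + 2 * C * R x)"
    by (rule infsum_mono[OF sF sdom pointwise])
  also have "\<dots> = 2 * (C + 1)\<^sup>2 * (\<Sum>\<^sub>\<infinity>x. m x * (f x)\<^sup>2) + 2 * C * (\<Sum>\<^sub>\<infinity>x. R x)"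
    using infsum_add[OF summable_on_cmult_right[OF sf] summable_on_cmult_right[OF sR]]
    by (simp add: infsum_cmult_right')
  also have "\<dots> \<le> 2 * (C + 1)\<^sup>2 * (\<Sum>\<^sub>\<infinity>x. m x * (f x)\<^sup>2) + 2 * C * (C * (\<Sum>\<^sub>\<infinity>x. m x * (f x)\<^sup>2))"
    using sum_R bound_nonneg by (intro add_left_mono mult_left_mono) auto
  finally show "(\<Sum>\<^sub>\<infinity>x. m x * (laplacian b m f x + f x)\<^sup>2)
      \<le> (2 * (C + 1)\<^sup>2 + 2 * C\<^sup>2) * (\<Sum>\<^sub>\<infinity>x. m x * (f x)\<^sup>2)"
    by (simp add: power2_eq_square algebra_simps)
qed

lemma bdd_above_op_norm_laplacian_plus_id:
  "bdd_above {l2_norm m (\<lambda>x. laplacian b m f x + f x) | f. in_l2 m f \<and> l2_norm m f \<le> 1}"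
proof (rule bdd_aboveI, clarify)
  fix f assume f: "in_l2 m f" "l2_norm m f \<le> 1"
  have "(\<Sum>\<^sub>\<infinity>x. m x * (f x)\<^sup>2) \<le> 1"
    using f(2) unfolding l2_norm_def l2_inner_self by (simp add: real_sqrt_le_1_iff)
  then have "(\<Sum>\<^sub>\<infinity>x. m x * (laplacian b m f x + f x)\<^sup>2) \<le> 2 * (C + 1)\<^sup>2 + 2 * C\<^sup>2"
    using l2_laplacian_plus_id_le[OF f(1)] by (smt (verit) mult_left_le zero_le_power2)
  then show "l2_norm m (\<lambda>x. laplacian b m f x + f x) \<le> sqrt (2 * (C + 1)\<^sup>2 + 2 * C\<^sup>2)"
    unfolding l2_norm_def l2_inner_self by simp
qed

lemma deg_div_le_op_norm: "deg y / m y + 1 \<le> op_norm m (\<lambda>f x. laplacian b m f x + f x)"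
proof -
  define d where "d = (\<lambda>z. if z = y then 1 / sqrt (m y) else 0)"
  define F where "F = (\<lambda>x. laplacian b m d x + d x)"
  have my: "0 < m y" by (rule measure_pos)
  have d: "in_l2 m d" unfolding in_l2_def by (rule infsum_single_support(1)[of y]) (simp add: d_def)
  have "l2_inner m d d = m y * (d y)\<^sup>2"
    unfolding l2_inner_self by (rule infsum_single_support(2)) (simp add: d_def)
  then have d_norm: "l2_norm m d = 1" using my by (simp add: l2_norm_def d_def power_divide)
  have "(\<Sum>\<^sub>\<infinity>z. b y z * d z) = b y y * d y" by (rule infsum_single_support(2)) (simp add: d_def)
  then have "F y = (deg y / m y + 1) * d y"
    unfolding F_def laplacian_eq[OF d] using weight_diag[of y] my by (simp add: field_simps)
  then have "(deg y / m y + 1)\<^sup>2 = m y * (F y)\<^sup>2"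
    unfolding d_def using my by (simp add: power_mult_distrib power_divide)
  also have "\<dots> \<le> l2_inner m F F"
    using finite_sum_le_infsum[of "\<lambda>x. m x * (F x)\<^sup>2" UNIV "{y}"] in_l2_laplacian_plus_id[OF d]
      measure_pos
    unfolding l2_inner_self F_def in_l2_def by (simp add: less_imp_le)
  finally have "deg y / m y + 1 \<le> l2_norm m F"
    unfolding l2_norm_def using deg_nonneg[of y] my by (simp add: real_le_rsqrt)
  also have "\<dots> \<le> op_norm m (\<lambda>f x. laplacian b m f x + f x)"
    unfolding op_norm_def F_def using d d_norm
    by (intro cSup_upper[OF _ bdd_above_op_norm_laplacian_plus_id]) auto
  finally show ?thesis .
qed

end

section \<open>Paths and distances\<close>

fun path_len :: "('a \<Rightarrow> 'a \<Rightarrow> real) \<Rightarrow> 'a list \<Rightarrow> real" where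
  "path_len b (x # y # p) = 1 / b x y + path_len b (y # p)"
| "path_len b _ = 0"

fun pos_path :: "('a \<Rightarrow> 'a \<Rightarrow> real) \<Rightarrow> 'a list \<Rightarrow> bool" where
  "pos_path b [] = False"
| "pos_path b [x] = True"
| "pos_path b (x # y # p) = (0 < b x y \<and> pos_path b (y # p))"

fun path_edges :: "'a list \<Rightarrow> ('a \<times> 'a) list" where
  "path_edges (x # y # p) = (x, y) # path_edges (y # p)"
| "path_edges _ = []"

lemma is_path_iff_pos_path: "is_path b p = pos_path b p"
  by (induction b p rule: pos_path.induct) (auto simp: is_path_def less_Suc_eq_0_disj)

lemma path_length_eq_path_len: "path_length b p = path_len b p"
  by (induction b p rule: path_len.induct)
    (simp_all add: path_length_def sum.lessThan_Suc_shift del: sum.lessThan_Suc)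

lemma path_len_nonneg: "pos_path b p \<Longrightarrow> 0 \<le> path_len b p"
  by (induction b p rule: pos_path.induct) auto

lemma path_len_Cons: "q \<noteq> [] \<Longrightarrow> path_len b (x # q) = 1 / b x (hd q) + path_len b q"
  by (cases q) auto

lemma pos_path_Cons: "q \<noteq> [] \<Longrightarrow> pos_path b (x # q) = (0 < b x (hd q) \<and> pos_path b q)"
  by (cases q) auto

lemma pos_path_not_Nil: "pos_path b p \<Longrightarrow> p \<noteq> []"
  by (cases p) auto

lemma path_len_eq_sum_edges: "path_len b p = sum_list (map (\<lambda>(u, v). 1 / b u v) (path_edges p))"
  by (induction b p rule: path_len.induct) auto

lemma diff_hd_last_eq_sum_edges:
  fixes f :: "'a \<Rightarrow> real"
  shows "p \<noteq> [] \<Longrightarrow> f (hd p) - f (last p) = sum_list (map (\<lambda>(u, v). f u - f v) (path_edges p))"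
  by (induction p rule: path_edges.induct) auto

lemma path_edges_mem: "(u, v) \<in> set (path_edges p) \<Longrightarrow> u \<in> set p \<and> v \<in> set p"
  by (induction p rule: path_edges.induct) auto

lemma path_edges_pos: "pos_path b p \<Longrightarrow> (u, v) \<in> set (path_edges p) \<Longrightarrow> 0 < b u v"
  by (induction b p rule: pos_path.induct) auto

lemma distinct_path_edges: "distinct p \<Longrightarrow> distinct (path_edges p)"
  by (induction p rule: path_edges.induct) (auto dest: path_edges_mem)

lemma path_edges_antisym: "distinct p \<Longrightarrow> (u, v) \<in> set (path_edges p) \<Longrightarrow> (v, u) \<notin> set (path_edges p)"
  by (induction p rule: path_edges.induct) (auto dest: path_edges_mem)

lemma inverse_weight_le_path_len:
  "pos_path b p \<Longrightarrow> (u, v) \<in> set (path_edges p) \<Longrightarrow> 1 / b u v \<le> path_len b p"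
proof (induction p rule: path_edges.induct)
  case (1 x y p)
  then have "0 \<le> 1 / b x y" and "0 \<le> path_len b (y # p)" by (auto intro: path_len_nonneg)
  moreover have "(u, v) = (x, y) \<or> 1 / b u v \<le> path_len b (y # p)" using 1 by auto
  moreover have "path_len b (x # y # p) = 1 / b x y + path_len b (y # p)" by simp
  ultimately show ?case by (smt (verit) prod.inject)
qed auto

lemma length_le_path_len:
  assumes "\<And>u v. b u v \<le> B"
  shows "pos_path b p \<Longrightarrow> real (length p - 1) \<le> path_len b p * B"
proof (induction p rule: path_edges.induct)
  case (1 x y p)
  then have IH: "real (length p) \<le> path_len b (y # p) * B" and "0 < b x y" by auto
  then have "1 \<le> 1 / b x y * B" using assms[of x y] by (simp add: field_simps)
  then show ?case using IH by (simp add: distrib_right)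
qed auto

lemma pos_path_prefix:
  "pos_path b p \<Longrightarrow> u \<in> set p \<Longrightarrow>
    \<exists>q. pos_path b q \<and> hd q = hd p \<and> last q = u \<and> path_len b q \<le> path_len b p"
proof (induction b p rule: pos_path.induct)
  case (3 b x y p)
  show ?case
  proof (cases "u = x")
    case True
    then show ?thesis using path_len_nonneg[OF "3.prems"(1)] by (intro exI[of _ "[x]"]) auto
  next
    case False
    then obtain q where "pos_path b q" "hd q = y" "last q = u" "path_len b q \<le> path_len b (y # p)"
      using 3 by auto
    then show ?thesis using "3.prems" pos_path_not_Nil
      by (intro exI[of _ "x # q"]) (auto simp: path_len_Cons pos_path_Cons)
  qed
qed (auto intro!: exI[of _ "[u]"])

lemma pos_path_suffix:
  "pos_path b q \<Longrightarrow> x \<in> set q \<Longrightarrow> distinct q \<Longrightarrow>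
    \<exists>r. pos_path b r \<and> hd r = x \<and> last r = last q \<and> distinct r \<and> path_len b r \<le> path_len b q"
proof (induction q rule: path_edges.induct)
  case (1 z w q)
  show ?case
  proof (cases "z = x")
    case False
    then obtain r where r: "pos_path b r" "hd r = x" "last r = last (w # q)" "distinct r"
      "path_len b r \<le> path_len b (w # q)"
      using 1 by auto
    have "0 \<le> 1 / b z w" using "1.prems"(1) by simp
    moreover have "path_len b (z # w # q) = 1 / b z w + path_len b (w # q)" by simp
    ultimately have "path_len b r \<le> path_len b (z # w # q)" using r(5) by linarith
    then show ?thesis using r by (intro exI[of _ r]) auto
  qed (use 1 in \<open>intro exI[of _ "z # w # q"], auto\<close>)
qed (auto intro!: exI[of _ "[x]"])

lemma pos_path_distinct:
  "pos_path b p \<Longrightarrow>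
    \<exists>q. pos_path b q \<and> hd q = hd p \<and> last q = last p \<and> distinct q \<and> path_len b q \<le> path_len b p"
proof (induction p rule: path_edges.induct)
  case (1 x y p)
  then obtain q where q: "pos_path b q" "hd q = y" "last q = last (y # p)" "distinct q"
    "path_len b q \<le> path_len b (y # p)"
    by auto
  show ?case
  proof (cases "x \<in> set q")
    case False
    then show ?thesis using q "1.prems" pos_path_not_Nil[OF q(1)]
      by (intro exI[of _ "x # q"]) (auto simp: path_len_Cons pos_path_Cons)
  next
    case True
    then obtain r where r: "pos_path b r" "hd r = x" "last r = last q" "distinct r"
      "path_len b r \<le> path_len b q"
      using pos_path_suffix[OF q(1) _ q(4)] by blast
    have "0 \<le> 1 / b x y" using "1.prems" by simp
    moreover have "path_len b (x # y # p) = 1 / b x y + path_len b (y # p)" by simp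
    ultimately have "path_len b r \<le> path_len b (x # y # p)" using r(5) q(5) by linarith
    then show ?thesis using r q by (intro exI[of _ r]) auto
  qed
qed (auto intro!: exI[of _ "[x]" for x])

lemma pos_path_snoc: "p \<noteq> [] \<Longrightarrow> pos_path b (p @ [z]) = (pos_path b p \<and> 0 < b (last p) z)"
  by (induction b p rule: pos_path.induct) auto

lemma path_len_snoc: "p \<noteq> [] \<Longrightarrow> path_len b (p @ [z]) = path_len b p + 1 / b (last p) z"
  by (induction b p rule: path_len.induct) auto

lemma pos_path_rev:
  assumes "\<And>x y. b x y = b y x"
  shows "pos_path b p \<Longrightarrow> pos_path b (rev p) \<and> path_len b (rev p) = path_len b p"
proof (induction p rule: path_edges.induct)
  case (1 x y p)
  have ne: "rev (y # p) \<noteq> []" by simp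
  have rev: "rev (x # y # p) = rev (y # p) @ [x]" and "last (rev (y # p)) = y" by simp_all
  then show ?case
    unfolding rev pos_path_snoc[OF ne] path_len_snoc[OF ne] using 1 assms[of y x] by simp
qed auto

fun reach :: "('a \<Rightarrow> 'a \<Rightarrow> real) \<Rightarrow> real \<Rightarrow> nat \<Rightarrow> 'a \<Rightarrow> 'a set" where
  "reach b e 0 u = {u}"
| "reach b e (Suc n) u = insert u (\<Union>y\<in>{y. e < b u y}. reach b e n y)"

lemma reach_mono: "n \<le> N \<Longrightarrow> reach b e n u \<subseteq> reach b e N u"
proof (induction N arbitrary: u rule: dec_induct)
  case (step k)
  have "reach b e k u \<subseteq> reach b e (Suc k) u" for u
    by (induction k arbitrary: u) auto
  then show ?case using step by blast
qed simp

lemma set_path_subset_reach: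
  "pos_path b p \<Longrightarrow> (\<And>u v. (u, v) \<in> set (path_edges p) \<Longrightarrow> e < b u v) \<Longrightarrow>
    set p \<subseteq> reach b e (length p - 1) (hd p)"
  by (induction p rule: path_edges.induct) auto


context
  fixes b :: "'a \<Rightarrow> 'a \<Rightarrow> real"
  assumes connected: "graph_connected b" and weight_sym: "\<And>x y. b x y = b y x"
begin

lemma gdist_eq_Inf_path_len:
  "gdist b x y = Inf {path_len b p | p. pos_path b p \<and> hd p = x \<and> last p = y}"
  unfolding gdist_def is_path_iff_pos_path path_length_eq_path_len ..

lemma path_lens_nonempty: "{path_len b p | p. pos_path b p \<and> hd p = x \<and> last p = y} \<noteq> {}"
  using connected unfolding graph_connected_def is_path_iff_pos_path by blast

lemma gdist_le_path_len: "pos_path b p \<Longrightarrow> gdist b (hd p) (last p) \<le> path_len b p"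
  unfolding gdist_eq_Inf_path_len
  by (rule cInf_lower) (auto intro!: bdd_belowI[of _ 0] path_len_nonneg)

lemma gdist_less_imp_path:
  "gdist b x y < r \<Longrightarrow> \<exists>p. pos_path b p \<and> hd p = x \<and> last p = y \<and> path_len b p < r"
  unfolding gdist_eq_Inf_path_len using cInf_lessD[OF path_lens_nonempty] by blast

lemma gdist_sym: "gdist b y x = gdist b x y"
proof -
  have "gdist b y x \<le> gdist b x y" for x y
    unfolding gdist_eq_Inf_path_len[of x y]
  proof (rule cInf_greatest[OF path_lens_nonempty])
    fix l assume "l \<in> {path_len b p | p. pos_path b p \<and> hd p = x \<and> last p = y}"
    then obtain p where p: "pos_path b p" "hd p = x" "last p = y" "l = path_len b p" by blast
    have "pos_path b (rev p)" "path_len b (rev p) = path_len b p"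
      using pos_path_rev[OF weight_sym p(1)] by auto
    then show "gdist b y x \<le> l"
      using gdist_le_path_len[of "rev p"] p pos_path_not_Nil[OF p(1)] by (simp add: hd_rev last_rev)
  qed
  then show ?thesis by (simp add: order_antisym)
qed

end

section \<open>Spectral resolutions\<close>

lemma l2_inner_self_eq_0:
  assumes "\<And>x. 0 < m x" and "in_l2 m v" and "l2_inner m v v = 0"
  shows "v = (\<lambda>x. 0)"
proof
  fix x
  have "m x * (v x)\<^sup>2 = 0"
    by (rule nonneg_infsum_le_0D[of "\<lambda>x. m x * (v x)\<^sup>2" UNIV])
      (use assms in \<open>auto simp: l2_inner_self in_l2_def less_imp_le\<close>)
  then show "v x = 0" using assms(1)[of x] by simp
qed

context
  fixes m :: "'a \<Rightarrow> real" and H and E :: "real set \<Rightarrow> ('a \<Rightarrow> real) \<Rightarrow> ('a \<Rightarrow> real)"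
  assumes sr: "spectral_resolution m H E"
begin

lemma spectral_resolution_in_l2: "A \<in> sets borel \<Longrightarrow> in_l2 m f \<Longrightarrow> in_l2 m (E A f)"
  using sr unfolding spectral_resolution_def by blast

lemma spectral_resolution_selfadjoint:
  "A \<in> sets borel \<Longrightarrow> in_l2 m f \<Longrightarrow> in_l2 m g \<Longrightarrow> l2_inner m (E A f) g = l2_inner m f (E A g)"
  using sr unfolding spectral_resolution_def by blast

lemma spectral_resolution_Int:
  "A \<in> sets borel \<Longrightarrow> B \<in> sets borel \<Longrightarrow> in_l2 m f \<Longrightarrow> E (A \<inter> B) f = E A (E B f)"
  using sr unfolding spectral_resolution_def by blast

lemma spectral_resolution_UNIV: "in_l2 m f \<Longrightarrow> E UNIV f = f"
  using sr unfolding spectral_resolution_def by blast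

lemma spectral_measure_exists:
  assumes "in_l2 m f"
  obtains \<mu> where "finite_measure \<mu>" and "sets \<mu> = sets borel"
    and "\<forall>A\<in>sets borel. measure \<mu> A = l2_inner m (E A f) f"
    and "integrable \<mu> (\<lambda>t. t)" and "l2_inner m (H f) f = (\<integral>t. t \<partial>\<mu>)"
proof -
  have "\<exists>\<mu>. finite_measure \<mu> \<and> sets \<mu> = sets borel \<and>
      (\<forall>A\<in>sets borel. measure \<mu> A = l2_inner m (E A f) f) \<and>
      integrable \<mu> (\<lambda>t. t) \<and> l2_inner m (H f) f = (\<integral>t. t \<partial>\<mu>)"
    using sr assms unfolding spectral_resolution_def by blast
  then show ?thesis by (elim exE conjE) (rule that)
qed

lemma spectral_resolution_quadratic_form:
  assumes "A \<in> sets borel" and "in_l2 m f"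
  shows "l2_inner m (E A f) f = l2_inner m (E A f) (E A f)"
  using spectral_resolution_selfadjoint[OF assms(1) spectral_resolution_in_l2[OF assms] assms(2)]
    spectral_resolution_Int[OF assms(1) assms] by (metis Int_absorb)

lemma spectral_resolution_empty:
  assumes "\<And>x. 0 < m x" and "in_l2 m f"
  shows "E {} f = (\<lambda>x. 0)"
proof -
  have empty: "{} \<in> sets borel" by simp
  obtain \<mu> where "finite_measure \<mu>" "sets \<mu> = sets borel"
    and \<mu>: "\<forall>A\<in>sets borel. measure \<mu> A = l2_inner m (E A f) f"
    and "integrable \<mu> (\<lambda>t. t)" "l2_inner m (H f) f = (\<integral>t. t \<partial>\<mu>)"
    by (rule spectral_measure_exists[OF assms(2)])
  from \<mu>[rule_format, OF empty] have "l2_inner m (E {} f) (E {} f) = 0"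
    unfolding spectral_resolution_quadratic_form[OF empty assms(2)] by simp
  then show ?thesis
    by (rule l2_inner_self_eq_0[OF assms(1) spectral_resolution_in_l2[OF empty assms(2)]])
qed

text \<open>The spectral measure of \<open>E I f\<close> is concentrated on \<open>I\<close>.\<close>

lemma quadratic_form_spectral_le:
  assumes "\<And>x. 0 < m x" and "in_l2 m f" and I: "I \<in> sets borel" and "\<forall>y\<in>I. y \<le> M"
  shows "l2_inner m (H (E I f)) (E I f) \<le> M * l2_inner m (E I f) (E I f)"
proof -
  define g where "g = E I f"
  have g: "in_l2 m g" unfolding g_def by (rule spectral_resolution_in_l2[OF I assms(2)])
  obtain \<mu> where mu: "finite_measure \<mu>" "sets \<mu> = sets borel"
    "\<forall>A\<in>sets borel. measure \<mu> A = l2_inner m (E A g) g" "integrable \<mu> (\<lambda>t. t)"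
    "l2_inner m (H g) g = (\<integral>t. t \<partial>\<mu>)"
    by (rule spectral_measure_exists[OF g])
  interpret finite_measure \<mu> by (rule mu(1))
  have space: "space \<mu> = UNIV" using sets_eq_imp_space_eq[OF mu(2)] by simp
  have compl: "UNIV - I \<in> sets borel" using borel_comp[OF I] by (simp add: Compl_eq_Diff_UNIV)
  have "E (UNIV - I) g = E {} f"
    unfolding g_def using spectral_resolution_Int[OF compl I assms(2)]
      by (simp add: Diff_Int_distrib2)
  then have "measure \<mu> (UNIV - I) = 0"
    using mu(3)[rule_format, OF compl] spectral_resolution_empty[OF assms(1,2)]
      by (simp add: l2_inner_def)
  then have "UNIV - I \<in> null_sets \<mu>" using compl mu(2) by (auto simp: emeasure_eq_measure)
  then have "AE t in \<mu>. t \<le> M" by (rule AE_I') (use assms(4) in auto)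
  then have "(\<integral>t. t \<partial>\<mu>) \<le> measure \<mu> UNIV * M"
    using integral_mono_AE[OF mu(4) integrable_const] space by simp
  also have "measure \<mu> UNIV = l2_inner m g g" using mu(3) spectral_resolution_UNIV[OF g] by simp
  finally show ?thesis using mu(5) unfolding g_def by (simp add: mult.commute)
qed

end

section \<open>Hardy's inequality on the complement of a relatively dense set\<close>

fun tree_card :: "nat \<Rightarrow> nat \<Rightarrow> nat" where
  "tree_card B 0 = 1"
| "tree_card B (Suc n) = Suc (B * tree_card B n)"

locale relatively_dense_graph = bounded_weighted_graph b m C
  for b :: "'a::countable \<Rightarrow> 'a \<Rightarrow> real" and m C +
  fixes D :: "'a set" and M R :: real
  assumes connected: "graph_connected b" and measure_le: "\<And>x. m x \<le> M"
    and cover: "(\<Union>p\<in>D. closed_ball b R p) = UNIV"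
    and complement_nonempty: "UNIV - D \<noteq> {}"
begin

definition wbound :: real where
  "wbound = C * M + 1"

lemma weight_less_wbound: "b x y < wbound"
  using weight_le_deg[of x y] deg_le[of x] mult_left_mono[OF measure_le[of x] bound_nonneg]
  unfolding wbound_def by linarith

lemma wbound_pos: "0 < wbound"
  using weight_less_wbound weight_nonneg by (meson le_less_trans)

lemma heavy_neighbours:
  assumes e: "0 < e"
  shows "finite {y. e < b u y}" and "real (card {y. e < b u y}) * e \<le> deg u"
proof -
  have card_le: "real (card F) * e \<le> deg u" if F: "finite F" "F \<subseteq> {y. e < b u y}" for F
  proof -
    have "real (card F) * e \<le> sum (b u) F"
      by (rule sum_bounded_below) (use F in auto)
    also have "\<dots> \<le> infsum (b u) UNIV"
      by (rule finite_sum_le_infsum) (use F weight_summable weight_nonneg in auto)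
    finally show ?thesis unfolding deg_def by simp
  qed
  show fin: "finite {y. e < b u y}"
  proof (rule ccontr)
    assume "infinite {y. e < b u y}"
    then obtain F where F: "finite F" "card F = nat \<lceil>deg u / e\<rceil> + 1" "F \<subseteq> {y. e < b u y}"
      using infinite_arbitrarily_large by blast
    have "deg u / e < real (card F)" using F(2) by linarith
    then show False using card_le[OF F(1,3)] e by (simp add: divide_less_eq)
  qed
  show "real (card {y. e < b u y}) * e \<le> deg u" by (rule card_le[OF fin]) simp
qed

definition nbr_bound :: "real \<Rightarrow> nat" where
  "nbr_bound e = nat \<lceil>wbound / e\<rceil>"

lemma card_heavy_neighbours: "0 < e \<Longrightarrow> card {y. e < b u y} \<le> nbr_bound e"
proof -
  assume e: "0 < e"
  have "real (card {y. e < b u y}) * e \<le> wbound"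
    using heavy_neighbours(2)[OF e, of u] deg_le[of u] mult_left_mono[OF measure_le[of u] bound_nonneg]
    unfolding wbound_def by linarith
  then have "real (card {y. e < b u y}) \<le> wbound / e" using e by (simp add: le_divide_eq)
  then show ?thesis unfolding nbr_bound_def by linarith
qed

lemma reach_finite_card:
  "0 < e \<Longrightarrow> finite (reach b e n u) \<and> card (reach b e n u) \<le> tree_card (nbr_bound e) n"
proof (induction n arbitrary: u)
  case (Suc n)
  let ?N = "{y. e < b u y}"
  have fin: "finite ?N" by (rule heavy_neighbours(1)[OF Suc.prems])
  then have fin_union: "finite (\<Union>y\<in>?N. reach b e n y)" using Suc by auto
  have "card (\<Union>y\<in>?N. reach b e n y) \<le> (\<Sum>y\<in>?N. card (reach b e n y))" by (rule card_UN_le[OF fin])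
  also have "\<dots> \<le> card ?N * tree_card (nbr_bound e) n"
    using sum_bounded_above[of ?N "\<lambda>y. card (reach b e n y)"] Suc by auto
  also have "\<dots> \<le> nbr_bound e * tree_card (nbr_bound e) n"
    using card_heavy_neighbours[OF Suc.prems] by simp
  finally show ?case using fin_union by (simp add: card_insert_if)
qed simp

definition steps_bound :: "real \<Rightarrow> nat" where
  "steps_bound r = nat \<lceil>(r + 1) * wbound\<rceil>"

text \<open>A path shorter than \<open>r + 1\<close> uses only edges of weight above \<open>1 / (r + 1)\<close>, and at most
  \<open>steps_bound r\<close> of them since every weight is below \<open>wbound\<close>.\<close>

lemma short_path_subset_reach:
  assumes r: "0 \<le> r" and p: "pos_path b p" "path_len b p < r + 1"
  shows "set p \<subseteq> reach b (1 / (r + 1)) (steps_bound r) (hd p)" and "length p - 1 \<le> steps_bound r"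
proof -
  have heavy: "1 / (r + 1) < b v w" if "(v, w) \<in> set (path_edges p)" for v w
  proof -
    have bp: "0 < b v w" by (rule path_edges_pos[OF p(1) that])
    have "1 / b v w < r + 1" using inverse_weight_le_path_len[OF p(1) that] p(2) by simp
    then show ?thesis using bp r by (simp add: field_simps)
  qed
  have "real (length p - 1) \<le> path_len b p * wbound"
    by (rule length_le_path_len[OF less_imp_le[OF weight_less_wbound] p(1)])
  also have "\<dots> \<le> (r + 1) * wbound" using p(2) wbound_pos by simp
  finally show steps: "length p - 1 \<le> steps_bound r" unfolding steps_bound_def by linarith
  then have "reach b (1 / (r + 1)) (length p - 1) (hd p) \<subseteq> reach b (1 / (r + 1)) (steps_bound r) (hd p)"
    by (rule reach_mono)
  then show "set p \<subseteq> reach b (1 / (r + 1)) (steps_bound r) (hd p)"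
    using set_path_subset_reach[OF p(1) heavy] by blast
qed

lemma closed_ball_subset_reach:
  assumes "0 \<le> r"
  shows "closed_ball b r u \<subseteq> reach b (1 / (r + 1)) (steps_bound r) u"
proof
  fix y assume "y \<in> closed_ball b r u"
  then have "gdist b u y < r + 1" unfolding closed_ball_def by simp
  then obtain p where p: "pos_path b p" "hd p = u" "last p = y" "path_len b p < r + 1"
    using gdist_less_imp_path[OF connected weight_sym] by blast
  then show "y \<in> reach b (1 / (r + 1)) (steps_bound r) u"
    using short_path_subset_reach(1)[OF assms p(1,4)] pos_path_not_Nil[OF p(1)] by auto
qed

lemma finite_closed_ball: "0 \<le> r \<Longrightarrow> finite (closed_ball b r u)"
  using closed_ball_subset_reach reach_finite_card[of "1 / (r + 1)"]
  by (meson finite_subset divide_pos_pos zero_less_one add_nonneg_pos)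

lemma bdd_above_vol_closed_ball: "0 \<le> r \<Longrightarrow> bdd_above (range (\<lambda>x. vol m (closed_ball b r x)))"
proof (rule bdd_aboveI2)
  fix u assume r: "0 \<le> r"
  have e: "0 < 1 / (r + 1)" using r by simp
  have "vol m (closed_ball b r u) = sum m (closed_ball b r u)"
    unfolding vol_def using finite_closed_ball[OF r] by simp
  also have "\<dots> \<le> real (card (closed_ball b r u)) * M"
    by (rule sum_bounded_above) (use measure_le in auto)
  also have "\<dots> \<le> real (tree_card (nbr_bound (1 / (r + 1))) (steps_bound r)) * M"
  proof -
    have "card (closed_ball b r u) \<le> tree_card (nbr_bound (1 / (r + 1))) (steps_bound r)"
      using card_mono[OF _ closed_ball_subset_reach[OF r]] reach_finite_card[OF e] le_trans by blast
    then show ?thesis using measure_pos[of u] measure_le[of u] by (intro mult_right_mono) auto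
  qed
  finally show "vol m (closed_ball b r u)
      \<le> real (tree_card (nbr_bound (1 / (r + 1))) (steps_bound r)) * M" .
qed

abbreviation inr :: real where
  "inr \<equiv> inradius b (UNIV - D)"

definition inscribed_radii :: "real set" where
  "inscribed_radii = {r. r > 0 \<and> (\<exists>x\<in>UNIV - D. open_ball b r x \<subseteq> UNIV - D)}"

lemma inr_eq_Sup: "inr = Sup inscribed_radii"
  unfolding inradius_def inscribed_radii_def ..

text \<open>No edge is shorter than \<open>1 / wbound\<close>, so balls of that radius are singletons.\<close>

lemma inv_wbound_in_inscribed_radii: "1 / wbound \<in> inscribed_radii"
proof -
  obtain x where x: "x \<in> UNIV - D" using complement_nonempty by blast
  have "open_ball b (1 / wbound) x \<subseteq> {x}"
  proof
    fix y assume "y \<in> open_ball b (1 / wbound) x"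
    then obtain p where p: "pos_path b p" "hd p = x" "last p = y" "path_len b p < 1 / wbound"
      using gdist_less_imp_path[OF connected weight_sym] unfolding open_ball_def by blast
    show "y \<in> {x}"
    proof (cases p rule: path_edges.cases)
      case (1 z w q)
      then have e: "(z, w) \<in> set (path_edges p)" by simp
      have "1 / wbound < 1 / b z w"
        using path_edges_pos[OF p(1) e] weight_less_wbound[of z w] by (simp add: frac_less2)
      then show ?thesis using inverse_weight_le_path_len[OF p(1) e] p(4) by simp
    qed (use p in auto)
  qed
  then show ?thesis unfolding inscribed_radii_def using x wbound_pos by auto
qed

lemma bdd_above_inscribed_radii: "bdd_above inscribed_radii"
proof (rule bdd_aboveI[of _ R])
  fix r assume "r \<in> inscribed_radii"
  then obtain x where r: "x \<in> UNIV - D" "open_ball b r x \<subseteq> UNIV - D"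
    unfolding inscribed_radii_def by blast
  obtain p where p: "p \<in> D" "x \<in> closed_ball b R p" using cover by blast
  then have "p \<notin> open_ball b r x" using r(2) by blast
  then show "r \<le> R"
    using p(2) gdist_sym[OF connected weight_sym, of x p] unfolding open_ball_def closed_ball_def
      by simp
qed

lemma inr_pos: "0 < inr"
  using cSup_upper[OF inv_wbound_in_inscribed_radii bdd_above_inscribed_radii] wbound_pos
  unfolding inr_eq_Sup by (smt (verit) divide_pos_pos)

lemma path_to_D_shorter:
  assumes "x \<notin> D" and "inr < r"
  shows "\<exists>p. pos_path b p \<and> hd p = x \<and> last p \<in> D \<and> path_len b p < r"
proof -
  have "r \<notin> inscribed_radii"
    using assms(2) cSup_upper[OF _ bdd_above_inscribed_radii] unfolding inr_eq_Sup by force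
  then have "\<not> open_ball b r x \<subseteq> UNIV - D"
    using assms inr_pos unfolding inscribed_radii_def by auto
  then obtain y where "gdist b x y < r" "y \<in> D" unfolding open_ball_def by blast
  then show ?thesis using gdist_less_imp_path[OF connected weight_sym] by blast
qed

lemma finite_short_paths:
  assumes "0 \<le> r"
  shows "finite {p. pos_path b p \<and> hd p = x \<and> path_len b p < r + 1}"
proof (rule finite_subset)
  show "{p. pos_path b p \<and> hd p = x \<and> path_len b p < r + 1}
      \<subseteq> {p. set p \<subseteq> reach b (1 / (r + 1)) (steps_bound r) x \<and> length p \<le> Suc (steps_bound r)}"
    using short_path_subset_reach[OF assms] by fastforce
  show "finite {p. set p \<subseteq> reach b (1 / (r + 1)) (steps_bound r) x \<and> length p \<le> Suc (steps_bound r)}"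
    by (rule finite_lists_length_le) (use reach_finite_card[of "1 / (r + 1)"] assms in auto)
qed

text \<open>Among the finitely many paths from \<open>x\<close> into \<open>D\<close> shorter than \<open>inr + 1\<close>, a shortest one has
  length at most \<open>inr\<close>.\<close>

lemma escape_path_exists:
  "\<exists>p. pos_path b p \<and> hd p = x \<and> last p \<in> D \<and> distinct p \<and> path_len b p \<le> inr"
proof (cases "x \<in> D")
  case True
  then show ?thesis using inr_pos by (intro exI[of _ "[x]"]) auto
next
  case False
  define P where "P = {p. pos_path b p \<and> hd p = x \<and> last p \<in> D \<and> path_len b p < inr + 1}"
  have "finite P"
    using finite_short_paths[of inr x] inr_pos unfolding P_def
      by (auto elim: finite_subset[rotated])
  moreover have "P \<noteq> {}"
    using path_to_D_shorter[OF False, of "inr + 1"] unfolding P_def by auto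
  ultimately obtain p where p: "p \<in> P" and shortest: "\<And>q. q \<in> P \<Longrightarrow> path_len b p \<le> path_len b q"
    using arg_min_if_finite[of P "path_len b"] by (metis arg_min_least)
  have "path_len b p \<le> inr"
  proof (rule ccontr)
    assume "\<not> path_len b p \<le> inr"
    then obtain q where "pos_path b q" "hd q = x" "last q \<in> D" "path_len b q < path_len b p"
      using path_to_D_shorter[OF False, of "path_len b p"] by (auto simp: not_le)
    then show False using shortest[of q] p unfolding P_def by fastforce
  qed
  moreover obtain q where "pos_path b q" "hd q = hd p" "last q = last p" "distinct q"
    "path_len b q \<le> path_len b p"
    using pos_path_distinct[of b p] p unfolding P_def by blast
  ultimately show ?thesis using p unfolding P_def by (intro exI[of _ q]) auto
qed

definition escape_path :: "'a \<Rightarrow> 'a list" where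
  "escape_path x = (SOME p. pos_path b p \<and> hd p = x \<and> last p \<in> D \<and> distinct p \<and> path_len b p \<le> inr)"

definition escape_edges :: "'a \<Rightarrow> ('a \<times> 'a) set" where
  "escape_edges x = set (path_edges (escape_path x))"

lemma escape_path:
  "pos_path b (escape_path x) \<and> hd (escape_path x) = x \<and> last (escape_path x) \<in> D \<and>
    distinct (escape_path x) \<and> path_len b (escape_path x) \<le> inr"
  unfolding escape_path_def by (rule someI_ex[OF escape_path_exists])

lemma escape_edges_pos: "(u, v) \<in> escape_edges x \<Longrightarrow> 0 < b u v"
  unfolding escape_edges_def using path_edges_pos[of b "escape_path x"] escape_path[of x] by blast

lemma escape_edges_antisym: "(u, v) \<in> escape_edges x \<Longrightarrow> (v, u) \<notin> escape_edges x"
  unfolding escape_edges_def using path_edges_antisym[of "escape_path x"] escape_path[of x] by blast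

lemma escape_path_closed_ball:
  assumes "u \<in> set (escape_path x)"
  shows "x \<in> closed_ball b inr u"
proof -
  obtain q where q: "pos_path b q" "hd q = x" "last q = u" "path_len b q \<le> path_len b (escape_path x)"
    using pos_path_prefix[OF _ assms] escape_path[of x] by auto
  then have "gdist b u x \<le> inr"
    using gdist_le_path_len[OF connected weight_sym q(1)] gdist_sym[OF connected weight_sym, of u x]
      escape_path[of x] by simp
  then show ?thesis unfolding closed_ball_def by simp
qed

lemma escape_edges_closed_ball:
  "(u, v) \<in> escape_edges x \<Longrightarrow> x \<in> closed_ball b inr u \<and> x \<in> closed_ball b inr v"
  using path_edges_mem[of u v "escape_path x"] escape_path_closed_ball unfolding escape_edges_def
    by blast

lemma escape_path_sums:
  fixes f :: "'a \<Rightarrow> real"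
  shows "path_len b (escape_path x) = (\<Sum>(u, v)\<in>escape_edges x. 1 / b u v)"
  "f x - f (last (escape_path x)) = (\<Sum>(u, v)\<in>escape_edges x. f u - f v)"
proof -
  have distinct: "distinct (path_edges (escape_path x))"
    using distinct_path_edges escape_path[of x] by blast
  show "path_len b (escape_path x) = (\<Sum>(u, v)\<in>escape_edges x. 1 / b u v)"
    unfolding escape_edges_def path_len_eq_sum_edges
      by (rule sum_list_distinct_conv_sum_set[OF distinct])
  show "f x - f (last (escape_path x)) = (\<Sum>(u, v)\<in>escape_edges x. f u - f v)"
    using diff_hd_last_eq_sum_edges[of "escape_path x" f] escape_path[of x]
      pos_path_not_Nil[of b "escape_path x"]
    unfolding escape_edges_def by (simp add: sum_list_distinct_conv_sum_set[OF distinct])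
qed

definition edge_energy :: "('a \<Rightarrow> real) \<Rightarrow> 'a \<times> 'a \<Rightarrow> real" where
  "edge_energy f e = (case e of (u, v) \<Rightarrow> b u v * (f u - f v)\<^sup>2)"

lemma edge_energy_nonneg: "0 \<le> edge_energy f e"
  unfolding edge_energy_def by (auto simp: weight_nonneg split: prod.splits)

text \<open>Cauchy-Schwarz along the escape path, with weights \<open>1 / b\<close> and \<open>b\<close>.\<close>

lemma square_le_escape_energy:
  assumes "\<forall>y\<in>D. f y = 0"
  shows "(f x)\<^sup>2 \<le> inr * (\<Sum>e\<in>escape_edges x. edge_energy f e)"
proof -
  let ?s = "\<lambda>e. sqrt (1 / b (fst e) (snd e))"
    and ?t = "\<lambda>e. sqrt (b (fst e) (snd e)) * (f (fst e) - f (snd e))"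
  have "f x = (\<Sum>(u, v)\<in>escape_edges x. f u - f v)"
    using escape_path_sums(2)[of f x] assms escape_path[of x] by simp
  also have "\<dots> = (\<Sum>e\<in>escape_edges x. ?s e * ?t e)"
    by (intro sum.cong) (auto dest!: escape_edges_pos simp: real_sqrt_divide mult.assoc[symmetric])
  finally have "(f x)\<^sup>2 \<le> (\<Sum>e\<in>escape_edges x. (?s e)\<^sup>2) * (\<Sum>e\<in>escape_edges x. (?t e)\<^sup>2)"
    using Cauchy_Schwarz_ineq_sum by simp
  also have "(\<Sum>e\<in>escape_edges x. (?s e)\<^sup>2) = path_len b (escape_path x)"
    unfolding escape_path_sums(1) by (intro sum.cong) (auto dest!: escape_edges_pos)
  also have "(\<Sum>e\<in>escape_edges x. (?t e)\<^sup>2) = (\<Sum>e\<in>escape_edges x. edge_energy f e)"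
    unfolding edge_energy_def
    by (intro sum.cong) (auto dest!: escape_edges_pos simp: power_mult_distrib less_imp_le)
  also have "path_len b (escape_path x) * (\<Sum>e\<in>escape_edges x. edge_energy f e)
      \<le> inr * (\<Sum>e\<in>escape_edges x. edge_energy f e)"
    using escape_path[of x] edge_energy_nonneg by (intro mult_right_mono sum_nonneg) auto
  finally show ?thesis .
qed

lemma summable_edge_energy: "in_l2 m f \<Longrightarrow> edge_energy f summable_on UNIV"
  using summable_weight_diff_square unfolding edge_energy_def case_prod_unfold by simp

lemma infsum_edge_energy: "(\<Sum>\<^sub>\<infinity>e. edge_energy f e) = 2 * energy f"
  unfolding edge_energy_def energy_def case_prod_unfold by simp

abbreviation vol_inr :: real where
  "vol_inr \<equiv> vol_sup b m inr"

definition edge_load :: "'a \<times> 'a \<Rightarrow> real" where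
  "edge_load e = vol m {x. e \<in> escape_edges x}"

lemma finite_edge_users: "finite {x. (u, v) \<in> escape_edges x}"
  using finite_closed_ball[of inr u] inr_pos escape_edges_closed_ball
  by (auto intro: finite_subset[of _ "closed_ball b inr u"])

lemma
  shows summable_edge_load: "(\<lambda>x. m x * of_bool (e \<in> escape_edges x)) summable_on UNIV"
    and edge_load_eq_infsum: "edge_load e = (\<Sum>\<^sub>\<infinity>x. m x * of_bool (e \<in> escape_edges x))"
proof -
  obtain u v where e: "e = (u, v)" by fastforce
  show "(\<lambda>x. m x * of_bool (e \<in> escape_edges x)) summable_on UNIV"
    by (rule finite_nonzero_values_imp_summable_on) (use finite_edge_users[of u v] e in \<open>auto
        elim: finite_subset[rotated]\<close>)
  show "edge_load e = (\<Sum>\<^sub>\<infinity>x. m x * of_bool (e \<in> escape_edges x))"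
    unfolding edge_load_def vol_def by (rule infsum_cong_neutral) auto
qed

lemma edge_load_nonneg: "0 \<le> edge_load e"
  unfolding edge_load_def vol_def by (rule infsum_nonneg) (simp add: measure_pos less_imp_le)

text \<open>A vertex \<open>x\<close> whose escape path uses the edge \<open>(u, v)\<close> in either direction lies within \<open>inr\<close>
  of \<open>u\<close>, and no escape path uses both directions.\<close>

lemma edge_load_pair_le: "edge_load (u, v) + edge_load (v, u) \<le> vol_inr"
proof -
  let ?A = "{x. (u, v) \<in> escape_edges x}" and ?B = "{x. (v, u) \<in> escape_edges x}"
    and ?U = "closed_ball b inr u"
  have fin: "finite ?U" using finite_closed_ball[of inr u] inr_pos by simp
  have sub: "?A \<union> ?B \<subseteq> ?U" using escape_edges_closed_ball by blast
  have "edge_load (u, v) + edge_load (v, u) = sum m (?A \<union> ?B)"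
    unfolding edge_load_def vol_def using finite_edge_users escape_edges_antisym
    by (subst sum.union_disjoint) auto
  also have "\<dots> \<le> sum m ?U" by (rule sum_mono2[OF fin sub]) (simp add: measure_pos less_imp_le)
  also have "\<dots> \<le> vol_inr"
    unfolding vol_sup_def using bdd_above_vol_closed_ball[of inr] inr_pos fin
    by (intro cSUP_upper2[of _ _ u]) (auto simp: vol_def)
  finally show ?thesis .
qed

lemma edge_load_le: "edge_load e \<le> vol_inr"
  using edge_load_pair_le[of "fst e" "snd e"] edge_load_nonneg[of "(snd e, fst e)"] by simp

lemma summable_edge_energy_load:
  assumes "in_l2 m f"
  shows "(\<lambda>e. edge_energy f e * edge_load (g e)) summable_on UNIV"
proof (rule summable_on_abs_le)
  show "(\<lambda>e. vol_inr * edge_energy f e) summable_on UNIV"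
    by (rule summable_on_cmult_right[OF summable_edge_energy[OF assms]])
  show "\<bar>edge_energy f e * edge_load (g e)\<bar> \<le> vol_inr * edge_energy f e" for e
    using edge_energy_nonneg[of f e] edge_load_nonneg[of "g e"] edge_load_le[of "g e"]
    by (simp add: abs_mult mult.commute mult_left_mono)
qed

lemma infsum_edge_energy_load_le:
  assumes "in_l2 m f"
  shows "(\<Sum>\<^sub>\<infinity>e. edge_energy f e * edge_load e) \<le> vol_inr * energy f"
proof -
  have swap: "(\<Sum>\<^sub>\<infinity>e. edge_energy f e * edge_load (prod.swap e)) = (\<Sum>\<^sub>\<infinity>e. edge_energy f e * edge_load e)"
    using infsum_UNIV_swap[of "\<lambda>u v. edge_energy f (u, v) * edge_load (u, v)"]
    by (simp add: case_prod_unfold edge_energy_def weight_sym power2_commute prod.swap_def)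
  have "2 * (\<Sum>\<^sub>\<infinity>e. edge_energy f e * edge_load e)
      = (\<Sum>\<^sub>\<infinity>e. edge_energy f e * edge_load e + edge_energy f e * edge_load (prod.swap e))"
    using swap infsum_add[OF summable_edge_energy_load[OF assms, of id]
        summable_edge_energy_load[OF assms, of prod.swap]] by simp
  also have "\<dots> \<le> (\<Sum>\<^sub>\<infinity>e. vol_inr * edge_energy f e)"
  proof (rule infsum_mono)
    show "(\<lambda>e. edge_energy f e * edge_load e + edge_energy f e * edge_load (prod.swap e))
        summable_on UNIV"
      using summable_on_add[OF summable_edge_energy_load[OF assms, of id]
          summable_edge_energy_load[OF assms, of prod.swap]] by simp
    show "(\<lambda>e. vol_inr * edge_energy f e) summable_on UNIV"
      by (rule summable_on_cmult_right[OF summable_edge_energy[OF assms]])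
    show "edge_energy f e * edge_load e + edge_energy f e * edge_load (prod.swap e)
        \<le> vol_inr * edge_energy f e"
      for e
      using mult_left_mono[OF edge_load_pair_le[of "fst e" "snd e"] edge_energy_nonneg[of f e]]
      by (simp add: algebra_simps prod.swap_def)
  qed
  also have "\<dots> = vol_inr * (2 * energy f)" by (simp add: infsum_cmult_right' infsum_edge_energy)
  finally show ?thesis by simp
qed

lemma
  assumes "in_l2 m f"
  shows summable_escape_energy: "(\<lambda>x. m x * (\<Sum>e\<in>escape_edges x. edge_energy f e)) summable_on UNIV"
    and infsum_escape_energy: "(\<Sum>\<^sub>\<infinity>x. m x * (\<Sum>e\<in>escape_edges x. edge_energy f e))
      = (\<Sum>\<^sub>\<infinity>e. edge_energy f e * edge_load e)"
proof -
  define H where "H e x = edge_energy f e * (m x * of_bool (e \<in> escape_edges x))" for e x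
  have row: "((\<lambda>x. H e x) has_sum edge_energy f e * edge_load e) UNIV" for e
    unfolding H_def edge_load_eq_infsum
    by (rule has_sum_cmult_right[OF has_sum_infsum[OF summable_edge_load]])
  have column: "(\<Sum>\<^sub>\<infinity>e. H e x) = m x * (\<Sum>e\<in>escape_edges x. edge_energy f e)" for x
  proof -
    have "(\<Sum>\<^sub>\<infinity>e. H e x) = (\<Sum>\<^sub>\<infinity>e\<in>escape_edges x. H e x)"
      by (rule infsum_cong_neutral) (auto simp: H_def)
    then show ?thesis by (simp add: H_def escape_edges_def sum_distrib_left mult.commute)
  qed
  have "(\<lambda>(e, x). H e x) summable_on Sigma UNIV (\<lambda>_. UNIV)"
    by (rule summable_on_SigmaI[OF _ summable_edge_energy_load[OF assms, of id]])
      (use row edge_energy_nonneg measure_pos in \<open>auto simp: H_def less_imp_le\<close>)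
  then have summable: "(\<lambda>(e, x). H e x) summable_on UNIV" by simp
  have "(\<lambda>(x, e). H e x) summable_on UNIV"
    using summable_on_UNIV_swap[of H] summable by simp
  then show "(\<lambda>x. m x * (\<Sum>e\<in>escape_edges x. edge_energy f e)) summable_on UNIV"
    using summable_on_UNIV_prod_outer[of "\<lambda>x e. H e x"] column by simp
  have "(\<Sum>\<^sub>\<infinity>x. \<Sum>\<^sub>\<infinity>e. H e x) = (\<Sum>\<^sub>\<infinity>e. \<Sum>\<^sub>\<infinity>x. H e x)"
    using infsum_swap_banach[of "\<lambda>e x. H e x" UNIV UNIV] summable by simp
  then show "(\<Sum>\<^sub>\<infinity>x. m x * (\<Sum>e\<in>escape_edges x. edge_energy f e))
      = (\<Sum>\<^sub>\<infinity>e. edge_energy f e * edge_load e)"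
    using column infsumI[OF row] by simp
qed

theorem hardy_inequality:
  assumes "in_l2 m f" and "\<forall>y\<in>D. f y = 0"
  shows "(\<Sum>\<^sub>\<infinity>x. m x * (f x)\<^sup>2) \<le> inr * vol_inr * energy f"
proof -
  have "(\<Sum>\<^sub>\<infinity>x. m x * (f x)\<^sup>2) \<le> (\<Sum>\<^sub>\<infinity>x. inr * (m x * (\<Sum>e\<in>escape_edges x. edge_energy f e)))"
  proof (rule infsum_mono)
    show "(\<lambda>x. m x * (f x)\<^sup>2) summable_on UNIV" using assms(1) unfolding in_l2_def .
    show "(\<lambda>x. inr * (m x * (\<Sum>e\<in>escape_edges x. edge_energy f e))) summable_on UNIV"
      by (rule summable_on_cmult_right[OF summable_escape_energy[OF assms(1)]])
    show "m x * (f x)\<^sup>2 \<le> inr * (m x * (\<Sum>e\<in>escape_edges x. edge_energy f e))" for x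
      using mult_left_mono[OF square_le_escape_energy[OF assms(2), of x]
          less_imp_le[OF measure_pos[of x]]]
      by (simp add: algebra_simps)
  qed
  also have "\<dots> = inr * (\<Sum>\<^sub>\<infinity>e. edge_energy f e * edge_load e)"
    by (simp add: infsum_cmult_right' infsum_escape_energy[OF assms(1)])
  also have "\<dots> \<le> inr * (vol_inr * energy f)"
    using infsum_edge_energy_load_le[OF assms(1)] inr_pos by simp
  finally show ?thesis by (simp add: mult.assoc)
qed

section \<open>The uncertainty estimate\<close>

lemma vol_inr_nonneg: "0 \<le> vol_inr"
  using edge_load_nonneg edge_load_le order_trans by blast

text \<open>Hardy's inequality for the indicator of a single vertex outside \<open>D\<close>.\<close>

lemma inv_inr_vol_le:
  assumes "\<And>x. deg x \<le> c * m x"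
  shows "0 < inr * vol_inr" and "1 / (inr * vol_inr) \<le> 2 * c"
proof -
  obtain x where x: "x \<notin> D" using complement_nonempty by blast
  define \<delta> where "\<delta> = (\<lambda>z. if z = x then 1 else 0 :: real)"
  have \<delta>: "in_l2 m \<delta>" unfolding in_l2_def by (rule infsum_single_support(1)[of x]) (simp add: \<delta>_def)
  have norm: "(\<Sum>\<^sub>\<infinity>z. m z * (\<delta> z)\<^sup>2) = m x" using infsum_single_support(2)[of x] by (simp add: \<delta>_def)
  have "\<forall>y\<in>D. \<delta> y = 0" using x by (auto simp: \<delta>_def)
  then have "m x \<le> inr * vol_inr * energy \<delta>"
    using hardy_inequality[OF \<delta>] norm by simp
  also have "\<dots> \<le> inr * vol_inr * (2 * c * m x)"
    using energy_le[OF \<delta> assms] norm inr_pos vol_inr_nonneg by (intro mult_left_mono) auto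
  finally have "1 \<le> inr * vol_inr * (2 * c)" using measure_pos[of x] by (simp add: algebra_simps)
  moreover have "0 \<le> inr * vol_inr" using inr_pos vol_inr_nonneg by simp
  ultimately show "0 < inr * vol_inr" and "1 / (inr * vol_inr) \<le> 2 * c"
    by (auto simp: divide_le_eq mult.commute order_less_le)
qed

lemma uncertainty_estimate:
  assumes g: "in_l2 m g" and energy_g: "energy g \<le> s * (\<Sum>\<^sub>\<infinity>x. m x * (g x)\<^sup>2)"
    and s: "s < 1 / (inr * vol_inr)" and deg: "\<And>x. deg x \<le> c * m x"
  shows "(1 / (inr * vol_inr) - s)\<^sup>2 / (16 * (c + 1) ^ 4) * (\<Sum>\<^sub>\<infinity>x. m x * (g x)\<^sup>2)
    \<le> (\<Sum>\<^sub>\<infinity>x. m x * (indicator D x * g x)\<^sup>2)"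
proof -
  define l where "l = 1 / (inr * vol_inr)"
  define h k where "h x = indicator D x * g x" and "k x = indicator (- D) x * g x" for x
  define G X K where "G = (\<Sum>\<^sub>\<infinity>x. m x * (g x)\<^sup>2)" and "X = (\<Sum>\<^sub>\<infinity>x. m x * (h x)\<^sup>2)"
    and "K = (\<Sum>\<^sub>\<infinity>x. m x * (k x)\<^sup>2)"
  have m: "\<And>x. 0 \<le> m x" using measure_pos less_imp_le by blast
  have h: "in_l2 m h" and k: "in_l2 m k" unfolding h_def k_def
    by (rule in_l2_indicator_mult[OF m g])+
  have X: "0 \<le> X" and K: "0 \<le> K" unfolding X_def K_def by (intro infsum_nonneg; simp add: m)+
  have GXK: "G = X + K" unfolding G_def X_def K_def h_def k_def by (rule l2_split_indicator[OF m g])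
  show ?thesis
  proof (cases "G = 0")
    case True
    then show ?thesis using X unfolding G_def X_def h_def by simp
  next
    case False
    then have "0 < G" using GXK X K by simp
    moreover have "0 \<le> s * G" using energy_g energy_nonneg[of g] unfolding G_def by linarith
    ultimately have s0: "0 \<le> s" by (simp add: zero_le_mult_iff)
    have lK: "l * K \<le> energy k"
      using hardy_inequality[OF k] inv_inr_vol_le(1)[OF deg] unfolding K_def l_def k_def
      by (auto simp: field_simps)
    define t where "t = (l - s) / (2 * l)"
    have "s < l" using s unfolding l_def .
    then have t: "0 < t" unfolding t_def using s0 by simp
    have "energy k \<le> (1 + t) * energy g + (1 + 1 / t) * energy h"
      by (rule energy_diff_le[OF g h k _ t]) (simp add: h_def k_def indicator_def)
    also have "\<dots> \<le> (1 + t) * (s * G) + (1 + 1 / t) * (2 * c * X)"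
      using energy_g energy_le[OF h deg] t unfolding G_def X_def
        by (intro add_mono mult_left_mono) auto
    finally have key: "l * (G - X) \<le> (1 + t) * s * G + (1 + 1 / t) * (2 * c * X)"
      using lK GXK by (simp add: mult.assoc)
    have "l \<le> 2 * c" using inv_inr_vol_le(2)[OF deg] unfolding l_def .
    then have "(l - s)\<^sup>2 / (16 * (c + 1) ^ 4) * G \<le> X"
      using uncertainty_arith[OF s0 \<open>s < l\<close> _ less_imp_le[OF \<open>0 < G\<close>] X t_def key] by blast
    then show ?thesis unfolding l_def G_def X_def h_def .
  qed
qed


lemma spectral_projection_uncertainty:
  assumes E: "spectral_resolution m (laplacian b m) E" and I: "I \<in> sets borel"
    and "\<forall>y\<in>I. y \<le> s" and "s < 1 / (inr * vol_inr)" and "\<And>x. deg x \<le> c * m x"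
    and f: "in_l2 m f"
  shows "(1 / (inr * vol_inr) - s)\<^sup>2 / (16 * (c + 1) ^ 4) * l2_inner m (E I f) f
    \<le> l2_inner m (E I (\<lambda>x. indicator D x * E I f x)) f"
proof -
  define g where "g = E I f"
  have g: "in_l2 m g" unfolding g_def by (rule spectral_resolution_in_l2[OF E I f])
  have h: "in_l2 m (\<lambda>x. indicator D x * g x)"
    by (rule in_l2_indicator_mult[OF _ g]) (simp add: measure_pos less_imp_le)
  have "energy g \<le> s * (\<Sum>\<^sub>\<infinity>x. m x * (g x)\<^sup>2)"
    using quadratic_form_spectral_le[OF E measure_pos f I assms(3)] green_formula[OF g]
    unfolding g_def l2_inner_self by simp
  then have "(1 / (inr * vol_inr) - s)\<^sup>2 / (16 * (c + 1) ^ 4) * (\<Sum>\<^sub>\<infinity>x. m x * (g x)\<^sup>2)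
      \<le> (\<Sum>\<^sub>\<infinity>x. m x * (indicator D x * g x)\<^sup>2)"
    by (rule uncertainty_estimate[OF g _ assms(4,5)])
  moreover have "l2_inner m (E I (\<lambda>x. indicator D x * g x)) f = l2_inner m (\<lambda>x. indicator D x * g x) g"
    using spectral_resolution_selfadjoint[OF E I h f] by (simp add: g_def)
  moreover have "\<dots> = (\<Sum>\<^sub>\<infinity>x. m x * (indicator D x * g x)\<^sup>2)"
    unfolding l2_inner_def by (rule infsum_cong) (simp add: indicator_def power2_eq_square)
  moreover have "l2_inner m (E I f) f = (\<Sum>\<^sub>\<infinity>x. m x * (g x)\<^sup>2)"
    unfolding spectral_resolution_quadratic_form[OF E I f] g_def l2_inner_self ..
  ultimately show ?thesis unfolding g_def by simp
qed

end

theorem corollary5p2: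
  fixes b :: "'a::countable \<Rightarrow> 'a \<Rightarrow> real" and m :: "'a \<Rightarrow> real"
    and D :: "'a set" and I :: "real set" and maxI :: real
    and E :: "real set \<Rightarrow> ('a \<Rightarrow> real) \<Rightarrow> ('a \<Rightarrow> real)"
  assumes "weighted_graph b m"
    and "graph_connected b"
    and "condB b m"
    and "condM m"
    and "relatively_dense b D"
    and "UNIV - D \<noteq> {}"
    and "I \<in> sets borel"
    and "maxI \<in> I" and "\<forall>y\<in>I. y \<le> maxI"
    and "maxI < 1 / (inradius b (UNIV - D) * vol_sup b m (inradius b (UNIV - D)))"
    and "spectral_resolution m (laplacian b m) E"
  shows "\<forall>f. in_l2 m f \<longrightarrow>
           l2_inner m (E I (\<lambda>x. indicator D x * E I f x)) f
           \<ge> (1 / (inradius b (UNIV - D) * vol_sup b m (inradius b (UNIV - D))) - maxI)\<^sup>2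
               / (16 * (op_norm m (\<lambda>f x. laplacian b m f x + f x)) ^ 4)
             * l2_inner m (E I f) f"
proof -
  have m: "\<And>x. 0 < m x" using assms(1) unfolding weighted_graph_def by blast
  obtain C where "\<And>x. (\<Sum>\<^sub>\<infinity>y. b x y) / m x \<le> C" using assms(3) unfolding condB_def by blast
  then have "\<And>x. (\<Sum>\<^sub>\<infinity>y. b x y) \<le> C * m x" using m by (simp add: divide_le_eq)
  then interpret bounded_weighted_graph b m C
    using assms(1) unfolding weighted_graph_def by unfold_locales auto
  obtain M where "\<And>x. m x \<le> M" using assms(4) unfolding condM_def by blast
  moreover obtain R where "(\<Union>p\<in>D. closed_ball b R p) = UNIV"
    using assms(5) unfolding relatively_dense_def by blast
  ultimately interpret relatively_dense_graph b m C D M R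
    using assms(2,6) by unfold_locales auto
  define N where "N = op_norm m (\<lambda>f x. laplacian b m f x + f x)"
  have deg: "deg x \<le> (N - 1) * m x" for x
    using deg_div_le_op_norm[of x] pos_divide_le_eq[OF m[of x], of "deg x" "N - 1"] unfolding N_def
    by linarith
  show ?thesis
    using spectral_projection_uncertainty[OF assms(11,7,9,10) deg] unfolding N_def by auto
qed

end
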